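(* Let $\mathcal F_1$ and $\mathcal F_2$ be completely positive maps on $M_D$ with spectral radius $1$, where $\mathcal F_1$ is trace-preserving and $\tau(\mathcal F_1)<1$. Let $\rho_1$ be the unique density matrix with $\mathcal F_1(\rho_1)=\rho_1$. Let $\xi\in M_D$ satisfy $\mathcal F_2^\dagger(\xi)=\xi$, normalised so that $\mathrm{Tr}(\rho_1\xi)=1$. Set $$k=\frac{1+\tau(\mathcal F_1)}{1-\tau(\mathcal F_1)}\,\|\mathcal F_1-\mathcal F_2\|_{1\to1}.$$ If $k<1$, then $$\|\mathbb 1-\xi\|_\infty\le\frac{k}{1-k}.$$
   Context: Notation: $M_D$ is the space of complex $D\times D$ matrices and $\|\cdot\|_p$ is the Schatten $p$-norm ($\|\cdot\|_\infty$ the operator norm). For a linear map $\mathcal F$ on $M_D$, $\|\mathcal F\|_{1\to1}:=\sup_{\sigma\ne0}\|\mathcal F(\sigma)\|_1/\|\sigma\|_1$. The dual map $\mathcal F^\dagger$ is defined by $\mathrm{Tr}(A\,\mathcal F(B))=\mathrm{Tr}(\mathcal F^\dagger(A)B)$ for all $A,B$. The ergodicity coefficient is $\tau(\mathcal F):=\sup\{\|\mathcal F(\sigma)\|_1/\|\sigma\|_1:\ 0\ne\sigma\in M_D,\ \mathrm{Tr}\,\sigma=0\}$. A trace-preserving positive map with $\tau<1$ has a unique fixed density matrix. *)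

theory Defs
  imports "Jordan_Normal_Form.Matrix"
begin

text \<open>Matrices in M_D are complex matrices in carrier_mat D D (Jordan_Normal_Form).
  Linear maps on M_D are functions on complex mat, considered on carrier_mat D D.\<close>

definition mtrace :: "complex mat \<Rightarrow> complex" where
  "mtrace A = (\<Sum>i<dim_row A. A $$ (i,i))"

definition adj :: "complex mat \<Rightarrow> complex mat" where
  "adj A = mat (dim_col A) (dim_row A) (\<lambda>(i,j). cnj (A $$ (j,i)))"

definition vnorm :: "complex vec \<Rightarrow> real" where
  "vnorm v = sqrt (\<Sum>i<dim_vec v. (cmod (v $ i))\<^sup>2)"

definition quad :: "complex mat \<Rightarrow> complex vec \<Rightarrow> complex" where
  "quad A v = (\<Sum>i<dim_vec v. cnj (v $ i) * (A *\<^sub>v v) $ i)"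

definition psd :: "nat \<Rightarrow> complex mat \<Rightarrow> bool" where
  "psd D A \<longleftrightarrow> A \<in> carrier_mat D D \<and> adj A = A \<and>
     (\<forall>v \<in> carrier_vec D. Im (quad A v) = 0 \<and> Re (quad A v) \<ge> 0)"

definition density :: "nat \<Rightarrow> complex mat \<Rightarrow> bool" where
  "density D \<rho> \<longleftrightarrow> psd D \<rho> \<and> mtrace \<rho> = 1"

definition abs_mat :: "complex mat \<Rightarrow> complex mat" where
  "abs_mat A = (THE P. psd (dim_col A) P \<and> P * P = adj A * A)"

definition trace_norm :: "complex mat \<Rightarrow> real" where
  "trace_norm A = Re (mtrace (abs_mat A))"

definition op_norm :: "complex mat \<Rightarrow> real" where
  "op_norm A = Sup {vnorm (A *\<^sub>v v) | v. v \<in> carrier_vec (dim_col A) \<and> vnorm v \<le> 1}"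

definition linear_map_on :: "nat \<Rightarrow> (complex mat \<Rightarrow> complex mat) \<Rightarrow> bool" where
  "linear_map_on D F \<longleftrightarrow>
     (\<forall>A \<in> carrier_mat D D. F A \<in> carrier_mat D D) \<and>
     (\<forall>A \<in> carrier_mat D D. \<forall>B \<in> carrier_mat D D. F (A + B) = F A + F B) \<and>
     (\<forall>c. \<forall>A \<in> carrier_mat D D. F (c \<cdot>\<^sub>m A) = c \<cdot>\<^sub>m F A)"

text \<open>(id_n \<otimes> F) applied to an nD x nD matrix viewed as an n x n block matrix of D x D blocks.\<close>
definition ampl :: "nat \<Rightarrow> nat \<Rightarrow> (complex mat \<Rightarrow> complex mat) \<Rightarrow> complex mat \<Rightarrow> complex mat" where
  "ampl n D F X = mat (n*D) (n*D) (\<lambda>(i,j).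
      F (mat D D (\<lambda>(k,l). X $$ ((i div D)*D + k, (j div D)*D + l))) $$ (i mod D, j mod D))"

definition completely_positive :: "nat \<Rightarrow> (complex mat \<Rightarrow> complex mat) \<Rightarrow> bool" where
  "completely_positive D F \<longleftrightarrow> linear_map_on D F \<and>
     (\<forall>n. \<forall>X. psd (n*D) X \<longrightarrow> psd (n*D) (ampl n D F X))"

definition trace_preserving :: "nat \<Rightarrow> (complex mat \<Rightarrow> complex mat) \<Rightarrow> bool" where
  "trace_preserving D F \<longleftrightarrow> (\<forall>A \<in> carrier_mat D D. mtrace (F A) = mtrace A)"

definition map_eigenvalue :: "nat \<Rightarrow> (complex mat \<Rightarrow> complex mat) \<Rightarrow> complex \<Rightarrow> bool" where
  "map_eigenvalue D F c \<longleftrightarrow> (\<exists>X \<in> carrier_mat D D. X \<noteq> 0\<^sub>m D D \<and> F X = c \<cdot>\<^sub>m X)"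

definition map_spectral_radius :: "nat \<Rightarrow> (complex mat \<Rightarrow> complex mat) \<Rightarrow> real" where
  "map_spectral_radius D F = Sup {cmod c | c. map_eigenvalue D F c}"

definition dual_map :: "nat \<Rightarrow> (complex mat \<Rightarrow> complex mat) \<Rightarrow> complex mat \<Rightarrow> complex mat" where
  "dual_map D F A = (THE G. G \<in> carrier_mat D D \<and>
      (\<forall>B \<in> carrier_mat D D. mtrace (A * F B) = mtrace (G * B)))"

text \<open>Induced 1->1 norm; the set includes 0 (harmless, all ratios are \<ge> 0) so Sup is well defined.\<close>
definition norm_1to1 :: "nat \<Rightarrow> (complex mat \<Rightarrow> complex mat) \<Rightarrow> real" where
  "norm_1to1 D F = Sup (insert 0 {trace_norm (F \<sigma>) / trace_norm \<sigma> | \<sigma>.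
      \<sigma> \<in> carrier_mat D D \<and> \<sigma> \<noteq> 0\<^sub>m D D})"

definition ergodicity_coeff :: "nat \<Rightarrow> (complex mat \<Rightarrow> complex mat) \<Rightarrow> real" where
  "ergodicity_coeff D F = Sup (insert 0 {trace_norm (F \<sigma>) / trace_norm \<sigma> | \<sigma>.
      \<sigma> \<in> carrier_mat D D \<and> \<sigma> \<noteq> 0\<^sub>m D D \<and> mtrace \<sigma> = 0})"

end

theory Submission
  imports Defs "Jordan_Normal_Form.Schur_Decomposition" "HOL-Analysis.L2_Norm"
begin

text \<open>
  Put \<open>\<eta> = 1 - \<xi>\<close> and \<open>\<phi>(s) = Tr(s \<eta>)\<close>; by trace duality \<open>\<parallel>\<eta>\<parallel>\<^sub>\<infinity>\<close> is the norm of the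
  functional \<open>\<phi>\<close> with respect to the trace norm. Since \<open>F\<^sub>1\<close> preserves the trace and \<open>\<xi>\<close> is fixed
  by \<open>F\<^sub>2\<^sup>\<dagger>\<close>, \<open>\<phi>(s) = \<phi>(F\<^sub>1 s) + Tr((F\<^sub>1 - F\<^sub>2)(s) \<xi>)\<close>, and the last term is at most
  \<open>\<epsilon> (1 + \<parallel>\<eta>\<parallel>\<^sub>\<infinity>) \<parallel>s\<parallel>\<^sub>1\<close> with \<open>\<epsilon> = \<parallel>F\<^sub>1 - F\<^sub>2\<parallel>\<^sub>1\<^sub>\<rightarrow>\<^sub>1\<close>. On traceless \<open>s\<close> the map \<open>F\<^sub>1\<close>
  contracts by \<open>\<tau>\<close>, so there \<open>|\<phi>(s)| \<le> \<epsilon> (1 + \<parallel>\<eta>\<parallel>\<^sub>\<infinity>) \<parallel>s\<parallel>\<^sub>1 / (1 - \<tau>)\<close>. A general \<open>s\<close> is replaced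
  by the traceless \<open>s - Tr(s) \<rho>\<^sub>1\<close>, which \<open>\<phi> \<circ> F\<^sub>1\<close> cannot distinguish from \<open>s\<close> because
  \<open>\<phi>(\<rho>\<^sub>1) = 0\<close>; this gives \<open>|\<phi>(s)| \<le> k (1 + \<parallel>\<eta>\<parallel>\<^sub>\<infinity>) \<parallel>s\<parallel>\<^sub>1\<close>, i.e. \<open>\<parallel>\<eta>\<parallel>\<^sub>\<infinity> \<le> k (1 + \<parallel>\<eta>\<parallel>\<^sub>\<infinity>)\<close>.
\<close>

section \<open>Adjoint and trace\<close>

lemma index_adj[simp]: "i < dim_col A \<Longrightarrow> j < dim_row A \<Longrightarrow> adj A $$ (i,j) = cnj (A $$ (j,i))"
  unfolding adj_def by (rule index_mat(1)[THEN trans]) auto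

lemma dim_adj[simp]: "dim_row (adj A) = dim_col A" "dim_col (adj A) = dim_row A"
  unfolding adj_def by (rule dim_row_mat, rule dim_col_mat)

lemma adj_carrier[simp]: "A \<in> carrier_mat m n \<Longrightarrow> adj A \<in> carrier_mat n m"
  unfolding carrier_mat_def by auto

lemma index_mult_mat_sum:
  assumes "i < dim_row A" "j < dim_col B" "dim_col A = dim_row B"
  shows "(A * B) $$ (i,j) = (\<Sum>k<dim_col A. A $$ (i,k) * B $$ (k,j))"
  using assms by (simp add: scalar_prod_def atLeast0LessThan)

lemma adj_adj[simp]: "adj (adj A) = A"
  by (rule eq_matI) auto

lemma adj_mult: assumes "dim_col A = dim_row B" shows "adj (A * B) = adj B * adj A"
  by (rule eq_matI) (use assms in \<open>auto simp: index_mult_mat_sum mult.commute simp del: index_mult_mat(1)\<close>)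

lemma mtrace_cyclic: assumes "A \<in> carrier_mat m n" "B \<in> carrier_mat n m"
  shows "mtrace (A * B) = mtrace (B * A)"
proof -
  have "mtrace (A * B) = (\<Sum>i<m. \<Sum>k<n. A $$ (i,k) * B $$ (k,i))"
    using assms by (simp add: mtrace_def index_mult_mat_sum del: index_mult_mat(1))
  also have "\<dots> = (\<Sum>k<n. \<Sum>i<m. B $$ (k,i) * A $$ (i,k))"
    by (subst sum.swap) (simp add: mult.commute)
  also have "\<dots> = mtrace (B * A)"
    using assms by (simp add: mtrace_def index_mult_mat_sum del: index_mult_mat(1))
  finally show ?thesis .
qed

lemma mtrace_add: "A \<in> carrier_mat n n \<Longrightarrow> B \<in> carrier_mat n n \<Longrightarrow> mtrace (A + B) = mtrace A + mtrace B"
  by (simp add: mtrace_def sum.distrib)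

lemma mtrace_minus: "A \<in> carrier_mat n n \<Longrightarrow> B \<in> carrier_mat n n \<Longrightarrow> mtrace (A - B) = mtrace A - mtrace B"
  by (simp add: mtrace_def sum_subtractf)

lemma mtrace_smult: "A \<in> carrier_mat n n \<Longrightarrow> mtrace (c \<cdot>\<^sub>m A) = c * mtrace A"
  unfolding mtrace_def sum_distrib_left by (rule sum.cong) auto

lemma mtrace_zero: "mtrace (0\<^sub>m n n) = 0"
  by (simp add: mtrace_def)

section \<open>Inner product and Euclidean norm\<close>

definition cinner :: "complex vec \<Rightarrow> complex vec \<Rightarrow> complex" where
  "cinner u v = (\<Sum>i<dim_vec v. cnj (u $ i) * v $ i)"

lemma index_mult_mat_vec_sum: "i < dim_row A \<Longrightarrow> dim_vec v = dim_col A \<Longrightarrow>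
   (A *\<^sub>v v) $ i = (\<Sum>k<dim_col A. A $$ (i,k) * v $ k)"
  by (simp add: scalar_prod_def atLeast0LessThan)

lemma vnorm_L2: "vnorm v = L2_set (\<lambda>i. cmod (v $ i)) {..<dim_vec v}"
  by (simp add: vnorm_def L2_set_def)

lemma vnorm_nonneg: "vnorm v \<ge> 0" by (simp add: vnorm_def sum_nonneg)

lemma cnj_mult_self: "cnj a * a = complex_of_real ((cmod a)^2)"
  using complex_norm_square[of a] by (simp add: mult.commute)

lemma cinner_self: "cinner v v = complex_of_real (vnorm v ^ 2)"
proof -
  have "cinner v v = (\<Sum>i<dim_vec v. complex_of_real ((cmod (v $ i))^2))"
    unfolding cinner_def by (rule sum.cong) (auto simp: cnj_mult_self)
  also have "\<dots> = complex_of_real (\<Sum>i<dim_vec v. (cmod (v $ i))^2)" by simp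
  also have "(\<Sum>i<dim_vec v. (cmod (v $ i))^2) = vnorm v ^ 2"
    unfolding vnorm_def by (subst real_sqrt_pow2) (auto simp: sum_nonneg)
  finally show ?thesis .
qed

lemma cinner_cauchy_schwarz: assumes "dim_vec u = dim_vec v"
  shows "cmod (cinner u v) \<le> vnorm u * vnorm v"
proof -
  have "cmod (cinner u v) \<le> (\<Sum>i<dim_vec v. cmod (cnj (u $ i) * v $ i))"
    unfolding cinner_def by (rule norm_sum)
  also have "\<dots> = (\<Sum>i<dim_vec v. \<bar>cmod (u $ i)\<bar> * \<bar>cmod (v $ i)\<bar>)"
    by (simp add: norm_mult)
  also have "\<dots> \<le> L2_set (\<lambda>i. cmod (u $ i)) {..<dim_vec v} * L2_set (\<lambda>i. cmod (v $ i)) {..<dim_vec v}"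
    by (rule L2_set_mult_ineq)
  finally show ?thesis using assms by (simp add: vnorm_L2)
qed

lemma vnorm_zero_iff: "vnorm v = 0 \<longleftrightarrow> v = 0\<^sub>v (dim_vec v)"
proof
  assume "vnorm v = 0"
  hence "(\<Sum>i<dim_vec v. (cmod (v $ i))^2) = 0" unfolding vnorm_def by simp
  hence "\<forall>i\<in>{..<dim_vec v}. (cmod (v $ i))^2 = 0"
    by (subst (asm) sum_nonneg_eq_0_iff) auto
  thus "v = 0\<^sub>v (dim_vec v)" by (intro eq_vecI) auto
next
  assume "v = 0\<^sub>v (dim_vec v)"
  then have "\<forall>i<dim_vec v. v$i = 0" by (metis index_zero_vec(1))
  thus "vnorm v = 0" by (simp add: vnorm_def)
qed

lemma vnorm_smult: "vnorm (c \<cdot>\<^sub>v v) = cmod c * vnorm v"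
proof -
  have "vnorm (c \<cdot>\<^sub>v v) = sqrt ((cmod c)^2 * (\<Sum>i<dim_vec v. (cmod (v $ i))^2))"
    unfolding vnorm_def by (simp add: norm_mult power_mult_distrib sum_distrib_left)
  thus ?thesis by (simp add: real_sqrt_mult vnorm_def)
qed

lemma cinner_mult_adj: assumes "A \<in> carrier_mat m n" "u \<in> carrier_vec m" "v \<in> carrier_vec n"
  shows "cinner u (A *\<^sub>v v) = cinner (adj A *\<^sub>v u) v"
proof -
  have "cinner u (A *\<^sub>v v) = (\<Sum>i<m. \<Sum>k<n. cnj (u $ i) * (A $$ (i,k) * v $ k))"
    unfolding cinner_def using assms by (simp add: index_mult_mat_vec_sum sum_distrib_left del: index_mult_mat_vec)
  also have "\<dots> = (\<Sum>k<n. \<Sum>i<m. cnj (u $ i) * (A $$ (i,k) * v $ k))"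
    by (rule sum.swap)
  also have "\<dots> = cinner (adj A *\<^sub>v u) v"
    unfolding cinner_def using assms
    by (simp add: index_mult_mat_vec_sum sum_distrib_left mult_ac del: index_mult_mat_vec)
  finally show ?thesis .
qed

lemma quad_eq_cinner: "quad A v = cinner v (A *\<^sub>v v)" if "A \<in> carrier_mat n n" "v \<in> carrier_vec n"
  using that by (simp add: quad_def cinner_def)

section \<open>Unitary diagonalisation of Hermitian matrices\<close>

definition unitary :: "nat \<Rightarrow> complex mat \<Rightarrow> bool" where
  "unitary n U \<longleftrightarrow> U \<in> carrier_mat n n \<and> adj U * U = 1\<^sub>m n \<and> U * adj U = 1\<^sub>m n"

definition dmat :: "nat \<Rightarrow> (nat \<Rightarrow> real) \<Rightarrow> complex mat" where
  "dmat n f = mat n n (\<lambda>(i,j). if i = j then complex_of_real (f i) else 0)"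

lemma dmat_carrier[simp]: "dmat n f \<in> carrier_mat n n" by (simp add: dmat_def)

lemma dmat_dim[simp]: "dim_row (dmat n f) = n" "dim_col (dmat n f) = n" by (simp_all add: dmat_def)

lemma dmat_index[simp]: "i < n \<Longrightarrow> j < n \<Longrightarrow> dmat n f $$ (i,j) = (if i = j then complex_of_real (f i) else 0)"
  by (simp add: dmat_def)

lemma unitaryI_left: assumes "U \<in> carrier_mat n n" "adj U * U = 1\<^sub>m n" shows "unitary n U"
  using assms mat_mult_left_right_inverse[of "adj U" n U] unfolding unitary_def by auto

lemma eigenvector_exists: assumes A: "(A :: complex mat) \<in> carrier_mat (Suc n) (Suc n)"
  shows "\<exists>e v. v \<in> carrier_vec (Suc n) \<and> v \<noteq> 0\<^sub>v (Suc n) \<and> A *\<^sub>v v = e \<cdot>\<^sub>v v"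
proof -
  obtain as where cp: "char_poly A = (\<Prod>a\<leftarrow>as. [:- a, 1:])" and len: "length as = Suc n"
    using char_poly_factorized[OF A] by blast
  then obtain a as' where as: "as = a # as'" by (cases as) auto
  have "poly (char_poly A) a = 0" unfolding cp as by simp
  hence "eigenvalue A a" using eigenvalue_root_char_poly[OF A] by simp
  from find_eigenvector[OF A this] show ?thesis unfolding eigenvector_def using A by auto
qed

lemma corthogonal_basis_with_hd: assumes v: "(v :: complex vec) \<in> carrier_vec n" and v0: "v \<noteq> 0\<^sub>v n"
  shows "\<exists>ws. set ws \<subseteq> carrier_vec n \<and> corthogonal ws \<and> length ws = n \<and> hd ws = v"
proof -
  interpret cof_vec_space n "TYPE(complex)" .
  define b where "b = basis_completion v"
  define ws where "ws = gram_schmidt n b"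
  from basis_completion[OF v v0, folded b_def]
  have span_b: "span (set b) = carrier_vec n" and dist_b: "distinct b" 
    and indep: "\<not> lin_dep (set b)" and b: "set b \<subseteq> carrier_vec n" and hdb: "hd b = v" 
    and len_b: "length b = n" by auto
  from v v0 have n: "n \<noteq> 0" by (cases n) auto
  from hdb len_b n obtain vs where bv: "b = v # vs" by (cases b, auto)
  from gram_schmidt_result[OF b dist_b indep refl, folded ws_def]
  have ws: "set ws \<subseteq> carrier_vec n" "corthogonal ws" "length ws = n" 
    by (auto simp: len_b)
  from gram_schmidt_hd[OF v, of vs, folded bv] have hdws: "hd ws = v" unfolding ws_def .
  show ?thesis using ws hdws by blast
qed

lemma cscalar_prod_eq_cinner: assumes "dim_vec u = dim_vec w" shows "w \<bullet>c u = cinner u w"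
  unfolding scalar_prod_def cinner_def using assms
  by (auto simp: atLeast0LessThan mult.commute intro!: sum.cong)

lemma unitary_normalized_cols:
  assumes ws: "set ws \<subseteq> carrier_vec n" "corthogonal ws" "length ws = n"
  defines "U \<equiv> mat n n (\<lambda>(i,j). ws ! j $ i / complex_of_real (vnorm (ws ! j)))"
  shows "unitary n U"
proof -
  have U: "U \<in> carrier_mat n n" unfolding U_def by simp
  have wsc: "j < n \<Longrightarrow> ws ! j \<in> carrier_vec n" for j using ws by auto
  have r0: "vnorm (ws ! j) \<noteq> 0" if j: "j < n" for j
  proof
    assume "vnorm (ws ! j) = 0"
    hence "cinner (ws ! j) (ws ! j) = 0" by (simp add: cinner_self)
    moreover have "ws ! j \<bullet>c ws ! j \<noteq> 0" using ws j corthogonalD[of ws j j] by auto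
    ultimately show False by (simp add: cscalar_prod_eq_cinner)
  qed
  have "adj U * U = 1\<^sub>m n"
  proof (rule eq_matI)
    fix i j assume i: "i < dim_row (1\<^sub>m n)" and j: "j < dim_col (1\<^sub>m n)"
    hence i: "i < n" and j: "j < n" by auto
    have "(adj U * U) $$ (i,j) = (\<Sum>k<n. cnj (ws ! i $ k) * ws ! j $ k) /
        (complex_of_real (vnorm (ws ! i)) * complex_of_real (vnorm (ws ! j)))"
      using i j U unfolding U_def
      by (simp add: index_mult_mat_sum sum_divide_distrib del: index_mult_mat(1))
    also have "(\<Sum>k<n. cnj (ws ! i $ k) * ws ! j $ k) = cinner (ws ! i) (ws ! j)"
      unfolding cinner_def using wsc[OF j] by simp
    also have "cinner (ws ! i) (ws ! j) = ws ! j \<bullet>c ws ! i"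
      using wsc[OF i] wsc[OF j] by (simp add: cscalar_prod_eq_cinner)
    finally have e: "(adj U * U) $$ (i,j) = ws ! j \<bullet>c ws ! i /
        (complex_of_real (vnorm (ws ! i)) * complex_of_real (vnorm (ws ! j)))" .
    show "(adj U * U) $$ (i,j) = 1\<^sub>m n $$ (i,j)"
    proof (cases "i = j")
      case True
      have "ws ! j \<bullet>c ws ! i = complex_of_real (vnorm (ws ! i))^2"
        using True wsc[OF i] by (simp add: cscalar_prod_eq_cinner cinner_self)
      thus ?thesis unfolding e using True i r0[OF i] by (simp add: power2_eq_square)
    next
      case False
      hence "ws ! j \<bullet>c ws ! i = 0" using ws i j corthogonalD[of ws j i] by auto
      thus ?thesis unfolding e using False i j by simp
    qed
  qed (use U in auto)
  thus ?thesis using unitaryI_left U by blast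
qed

lemma unitary_mult:
  assumes "unitary n U" "unitary n V" shows "unitary n (U * V)"
proof -
  have U: "U \<in> carrier_mat n n" "adj U * U = 1\<^sub>m n" and V: "V \<in> carrier_mat n n" "adj V * V = 1\<^sub>m n"
    using assms unfolding unitary_def by auto
  have "adj U * (U * V) = V" using U V by (metis assoc_mult_mat adj_carrier left_mult_one_mat)
  moreover have "adj (U * V) * (U * V) = adj V * (adj U * (U * V))"
    using U V by (simp add: adj_mult) (metis assoc_mult_mat adj_carrier mult_carrier_mat)
  ultimately have "adj (U * V) * (U * V) = 1\<^sub>m n" using V by simp
  then show ?thesis using U V by (intro unitaryI_left) auto
qed

lemma unitary_first_col_eigenvector:
  assumes A: "A \<in> carrier_mat (Suc n) (Suc n)"
  obtains U e where "unitary (Suc n) U"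
    and "\<And>i. i < Suc n \<Longrightarrow> (adj U * A * U) $$ (i,0) = (if i = 0 then e else 0)"
proof -
  obtain e v where v: "v \<in> carrier_vec (Suc n)" "v \<noteq> 0\<^sub>v (Suc n)" and Av: "A *\<^sub>v v = e \<cdot>\<^sub>v v"
    using eigenvector_exists[OF A] by blast
  obtain ws where ws: "set ws \<subseteq> carrier_vec (Suc n)" "corthogonal ws" "length ws = Suc n" "hd ws = v"
    using corthogonal_basis_with_hd[OF v] by blast
  define U where "U = mat (Suc n) (Suc n) (\<lambda>(i,j). ws ! j $ i / complex_of_real (vnorm (ws ! j)))"
  have unitary: "unitary (Suc n) U" unfolding U_def by (rule unitary_normalized_cols[OF ws(1-3)])
  hence Uc: "U \<in> carrier_mat (Suc n) (Suc n)" and U_inv: "adj U * U = 1\<^sub>m (Suc n)"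
    unfolding unitary_def by auto
  have U_col: "U $$ (k,0) = v $ k / complex_of_real (vnorm v)" if "k < Suc n" for k
    using that ws(3,4) unfolding U_def by (cases ws) auto
  have AU_col: "(A * U) $$ (k,0) = e * U $$ (k,0)" if k: "k < Suc n" for k
  proof -
    have "(A * U) $$ (k,0) = (\<Sum>l<Suc n. A $$ (k,l) * v $ l) / complex_of_real (vnorm v)"
      using A Uc k U_col
      by (simp add: index_mult_mat_sum sum_divide_distrib del: index_mult_mat(1) sum.lessThan_Suc)
    also have "(\<Sum>l<Suc n. A $$ (k,l) * v $ l) = (A *\<^sub>v v) $ k"
      using A v k by (simp add: index_mult_mat_vec_sum del: index_mult_mat_vec)
    also have "\<dots> = e * v $ k" using Av v k by simp
    finally show ?thesis using U_col[OF k] by simp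
  qed
  have "(adj U * A * U) $$ (i,0) = (if i = 0 then e else 0)" if i: "i < Suc n" for i
  proof -
    have "adj U * A * U = adj U * (A * U)" using A Uc by (metis assoc_mult_mat adj_carrier)
    then have "(adj U * A * U) $$ (i,0) = (\<Sum>k<Suc n. adj U $$ (i,k) * (A * U) $$ (k,0))"
      using A Uc i by (simp add: index_mult_mat_sum del: index_mult_mat(1))
    also have "\<dots> = e * (\<Sum>k<Suc n. adj U $$ (i,k) * U $$ (k,0))"
      using AU_col by (simp add: sum_distrib_left mult_ac del: sum.lessThan_Suc)
    also have "(\<Sum>k<Suc n. adj U $$ (i,k) * U $$ (k,0)) = (adj U * U) $$ (i,0)"
      using Uc i by (simp add: index_mult_mat_sum del: index_mult_mat(1))
    finally show ?thesis using U_inv i by simp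
  qed
  with unitary show ?thesis by (rule that)
qed

definition one_block :: "nat \<Rightarrow> complex mat \<Rightarrow> complex mat" where
  "one_block n U = mat (Suc n) (Suc n) (\<lambda>(i,j).
     if i = 0 \<and> j = 0 then 1 else if i = 0 \<or> j = 0 then 0 else U $$ (i - 1, j - 1))"

lemma one_block_carrier[simp]: "one_block n U \<in> carrier_mat (Suc n) (Suc n)"
  and dim_one_block[simp]: "dim_row (one_block n U) = Suc n" "dim_col (one_block n U) = Suc n"
  by (simp_all add: one_block_def)


lemma unitary_one_block:
  assumes U: "unitary n U" shows "unitary (Suc n) (one_block n U)"
proof (rule unitaryI_left)
  let ?V = "one_block n U"
  have Uc: "U \<in> carrier_mat n n" and U_inv: "adj U * U = 1\<^sub>m n" using U unfolding unitary_def by auto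
  show "adj ?V * ?V = 1\<^sub>m (Suc n)"
  proof (rule eq_matI)
    fix i j assume "i < dim_row (1\<^sub>m (Suc n))" "j < dim_col (1\<^sub>m (Suc n))"
    hence i: "i < Suc n" and j: "j < Suc n" by auto
    have "(adj ?V * ?V) $$ (i,j) = (\<Sum>k<Suc n. cnj (?V $$ (k,i)) * ?V $$ (k,j))"
      using i j by (simp add: index_mult_mat_sum del: index_mult_mat(1) sum.lessThan_Suc)
    also have "\<dots> = cnj (?V $$ (0,i)) * ?V $$ (0,j) + (\<Sum>k<n. cnj (?V $$ (Suc k,i)) * ?V $$ (Suc k,j))"
      by (rule sum.lessThan_Suc_shift)
    also have "\<dots> = 1\<^sub>m (Suc n) $$ (i,j)"
    proof (cases "i = 0 \<or> j = 0")
      case True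
      thus ?thesis using i j unfolding one_block_def by auto
    next
      case False
      then obtain i' j' where ij: "i = Suc i'" "j = Suc j'" by (meson not0_implies_Suc)
      have "(\<Sum>k<n. cnj (?V $$ (Suc k,i)) * ?V $$ (Suc k,j)) = (\<Sum>k<n. cnj (U $$ (k,i')) * U $$ (k,j'))"
        using i j unfolding ij one_block_def by (intro sum.cong) auto
      also have "\<dots> = (adj U * U) $$ (i',j')"
        using Uc i j unfolding ij by (simp add: index_mult_mat_sum del: index_mult_mat(1))
      finally show ?thesis using U_inv i j unfolding ij one_block_def by auto
    qed
    finally show "(adj ?V * ?V) $$ (i,j) = 1\<^sub>m (Suc n) $$ (i,j)" .
  qed auto
qed simp

definition lower_block :: "nat \<Rightarrow> complex mat \<Rightarrow> complex mat" where
  "lower_block n B = mat n n (\<lambda>(i,j). B $$ (Suc i, Suc j))"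

lemma hermitian_lower_block:
  assumes "B \<in> carrier_mat (Suc n) (Suc n)" "adj B = B"
  shows "adj (lower_block n B) = lower_block n B"
proof (rule eq_matI)
  fix i j assume ij: "i < dim_row (lower_block n B)" "j < dim_col (lower_block n B)"
  then have "adj B $$ (Suc i, Suc j) = cnj (B $$ (Suc j, Suc i))" using assms(1) by (simp add: lower_block_def)
  then show "adj (lower_block n B) $$ (i,j) = lower_block n B $$ (i,j)"
    using assms(2) ij by (simp add: lower_block_def)
qed (simp_all add: lower_block_def)

lemma hermitian_mult_one_block:
  assumes B: "B \<in> carrier_mat (Suc n) (Suc n)" and herm: "adj B = B"
    and col: "\<And>i. i < Suc n \<Longrightarrow> B $$ (i,0) = (if i = 0 then e else 0)"
    and U: "U \<in> carrier_mat n n"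
    and BU: "lower_block n B * U = U * dmat n lam"
  shows "B * one_block n U = one_block n U * dmat (Suc n) (\<lambda>i. if i = 0 then Re e else lam (i - 1))"
    (is "_ = ?V * ?L")
proof (rule eq_matI)
  have row: "B $$ (0,j) = (if j = 0 then e else 0)" if "j < Suc n" for j
    using col[OF that] herm B that by (metis carrier_matD index_adj zero_less_Suc complex_cnj_zero)
  have row_Suc: "B $$ (0, Suc k) = 0" if "k < n" for k using row[of "Suc k"] that by simp
  have e_real: "cnj e = e"
    using herm B col[of 0] by (metis carrier_matD index_adj zero_less_Suc)
  fix i j assume "i < dim_row (?V * ?L)" "j < dim_col (?V * ?L)"
  hence i: "i < Suc n" and j: "j < Suc n" by auto
  have l: "(B * ?V) $$ (i,j) = B $$ (i,0) * ?V $$ (0,j) + (\<Sum>k<n. B $$ (i,Suc k) * ?V $$ (Suc k,j))"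
    using B i j by (simp add: index_mult_mat_sum sum.lessThan_Suc_shift del: index_mult_mat(1) sum.lessThan_Suc)
  have r: "(?V * ?L) $$ (i,j) = ?V $$ (i,0) * ?L $$ (0,j) + (\<Sum>k<n. ?V $$ (i,Suc k) * ?L $$ (Suc k,j))"
    using i j by (simp add: index_mult_mat_sum sum.lessThan_Suc_shift del: index_mult_mat(1) sum.lessThan_Suc)
  show "(B * ?V) $$ (i,j) = (?V * ?L) $$ (i,j)"
  proof (cases "i = 0 \<or> j = 0")
    case True
    thus ?thesis unfolding l r using i j col[OF i] row[OF j] row_Suc e_real
      by (auto simp: one_block_def complex_eq_iff)
  next
    case False
    then obtain i' j' where ij: "i = Suc i'" "j = Suc j'" by (meson not0_implies_Suc)
    have "(\<Sum>k<n. B $$ (i,Suc k) * ?V $$ (Suc k,j)) = (lower_block n B * U) $$ (i',j')"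
      using U i j unfolding ij one_block_def lower_block_def
      by (auto simp: index_mult_mat_sum simp del: index_mult_mat(1) intro!: sum.cong)
    also have "\<dots> = (U * dmat n lam) $$ (i',j')" by (simp add: BU)
    also have "\<dots> = (\<Sum>k<n. ?V $$ (i,Suc k) * ?L $$ (Suc k,j))"
      using U i j unfolding ij one_block_def
      by (auto simp: index_mult_mat_sum simp del: index_mult_mat(1) intro!: sum.cong)
    finally show ?thesis unfolding l r using i j unfolding ij one_block_def by simp
  qed
qed (use B in simp_all)

lemma hermitian_diagonalization:
  assumes "A \<in> carrier_mat n n" "adj A = A"
  shows "\<exists>U lam. unitary n U \<and> A * U = U * dmat n lam"
  using assms
proof (induction n arbitrary: A)
  case 0
  show ?case
    by (rule exI[of _ "1\<^sub>m 0"], rule exI[of _ "\<lambda>_. 0"])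
       (use 0 in \<open>auto simp: unitary_def intro!: eq_matI\<close>)
next
  case (Suc n)
  note A = Suc.prems(1) and herm = Suc.prems(2)
  obtain U e where U: "unitary (Suc n) U"
    and col: "\<And>i. i < Suc n \<Longrightarrow> (adj U * A * U) $$ (i,0) = (if i = 0 then e else 0)"
    using unitary_first_col_eigenvector[OF A] by blast
  have Uc: "U \<in> carrier_mat (Suc n) (Suc n)" and U_inv: "U * adj U = 1\<^sub>m (Suc n)"
    using U unfolding unitary_def by auto
  define B where "B = adj U * A * U"
  have Bc: "B \<in> carrier_mat (Suc n) (Suc n)" unfolding B_def using A Uc by auto
  have B_herm: "adj B = B"
    unfolding B_def using A Uc herm by (simp add: adj_mult assoc_mult_mat[of _ "Suc n" "Suc n" _ "Suc n" _ "Suc n"])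
  obtain W lam where W: "unitary n W" and BW: "lower_block n B * W = W * dmat n lam"
    using Suc.IH[of "lower_block n B"] hermitian_lower_block[OF Bc B_herm]
    by (auto simp: lower_block_def)
  have "U * B = U * (adj U * (A * U))"
    unfolding B_def using A Uc assoc_mult_mat[of "adj U" "Suc n" "Suc n" A "Suc n" U "Suc n"] by simp
  also have "\<dots> = (U * adj U) * (A * U)" using A Uc by (intro assoc_mult_mat[symmetric]) auto
  also have "\<dots> = A * U" unfolding U_inv using A Uc by simp
  finally have AU: "A * U = U * B" ..
  let ?V = "one_block n W" and ?L = "dmat (Suc n) (\<lambda>i. if i = 0 then Re e else lam (i - 1))"
  have "A * (U * ?V) = (A * U) * ?V"
    using A Uc assoc_mult_mat[of A "Suc n" "Suc n" U "Suc n" ?V "Suc n"] by simp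
  also have "\<dots> = U * (B * ?V)"
    unfolding AU using Uc Bc assoc_mult_mat[of U "Suc n" "Suc n" B "Suc n" ?V "Suc n"] by simp
  also have "B * ?V = ?V * ?L"
  proof (rule hermitian_mult_one_block[OF Bc B_herm])
    show "W \<in> carrier_mat n n" using W unfolding unitary_def by blast
    show "lower_block n B * W = W * dmat n lam" by (rule BW)
  qed (use col in \<open>simp add: B_def\<close>)
  also have "U * (?V * ?L) = (U * ?V) * ?L"
    using Uc assoc_mult_mat[of U "Suc n" "Suc n" ?V "Suc n" ?L "Suc n"] by simp
  finally have "A * (U * ?V) = (U * ?V) * ?L" .
  with unitary_mult[OF U unitary_one_block[OF W]] show ?case by blast
qed

lemma cinner_smult_right: "cinner u (c \<cdot>\<^sub>v v) = c * cinner u v"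
  by (simp add: cinner_def sum_distrib_left mult_ac)

lemma cinner_col: assumes "U \<in> carrier_mat n m" "W \<in> carrier_mat n m'" "i < m" "j < m'"
  shows "cinner (col U i) (col W j) = (adj U * W) $$ (i,j)"
  using assms by (simp add: cinner_def index_mult_mat_sum del: index_mult_mat(1))

lemma index_adj_mult_mult: assumes "U \<in> carrier_mat n m" "B \<in> carrier_mat n n" "W \<in> carrier_mat n m'"
  "i < m" "j < m'"
  shows "(adj U * B * W) $$ (i,j) = cinner (col U i) (B *\<^sub>v col W j)"
proof -
  have "adj U * B * W = adj U * (B * W)" using assms by (metis assoc_mult_mat adj_carrier)
  hence "(adj U * B * W) $$ (i,j) = cinner (col U i) (col (B * W) j)"
    using assms cinner_col[of U n m "B * W" m' i j] by simp
  also have "col (B * W) j = B *\<^sub>v col W j" by (rule col_mult2) (use assms in auto)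
  finally show ?thesis .
qed

lemma dmat_mult: "dmat n f * dmat n g = dmat n (\<lambda>i. f i * g i)"
proof (rule eq_matI)
  fix i j assume "i < dim_row (dmat n (\<lambda>i. f i * g i))" "j < dim_col (dmat n (\<lambda>i. f i * g i))"
  hence i: "i < n" and j: "j < n" by auto
  have "(dmat n f * dmat n g) $$ (i,j) = (\<Sum>k<n. dmat n f $$ (i,k) * dmat n g $$ (k,j))"
    using i j by (simp add: index_mult_mat_sum del: index_mult_mat(1))
  also have "\<dots> = (\<Sum>k\<in>{i}. dmat n f $$ (i,k) * dmat n g $$ (k,j))"
    by (rule sum.mono_neutral_right) (use i j in auto)
  finally show "(dmat n f * dmat n g) $$ (i,j) = dmat n (\<lambda>i. f i * g i) $$ (i,j)" using i j by simp
qed auto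

lemma adj_dmat[simp]: "adj (dmat n f) = dmat n f"
  by (rule eq_matI) auto

lemma mtrace_dmat: "mtrace (dmat n f) = complex_of_real (\<Sum>i<n. f i)"
  by (simp add: mtrace_def)

lemma cinner_dmat: assumes "w \<in> carrier_vec n"
  shows "cinner w (dmat n f *\<^sub>v w) = complex_of_real (\<Sum>i<n. f i * (cmod (w $ i))^2)"
proof -
  have "(dmat n f *\<^sub>v w) $ i = f i * w $ i" if "i < n" for i
  proof -
    have "(dmat n f *\<^sub>v w) $ i = (\<Sum>k<n. dmat n f $$ (i,k) * w $ k)"
      using that assms by (simp add: index_mult_mat_vec_sum del: index_mult_mat_vec)
    also have "\<dots> = (\<Sum>k\<in>{i}. dmat n f $$ (i,k) * w $ k)"
      by (rule sum.mono_neutral_right) (use that in auto)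
    finally show ?thesis using that by simp
  qed
  hence "cinner w (dmat n f *\<^sub>v w) = (\<Sum>i<n. complex_of_real (f i) * (cnj (w $ i) * w $ i))"
    unfolding cinner_def using assms by (auto intro!: sum.cong simp: mult_ac)
  also have "\<dots> = complex_of_real (\<Sum>i<n. f i * (cmod (w $ i))^2)"
    by (simp add: cnj_mult_self)
  finally show ?thesis .
qed

lemma vnorm_unitary: assumes "unitary n U" "v \<in> carrier_vec n"
  shows "vnorm (U *\<^sub>v v) = vnorm v"
proof -
  have U: "U \<in> carrier_mat n n" "adj U * U = 1\<^sub>m n" using assms unfolding unitary_def by auto
  have "complex_of_real (vnorm (U *\<^sub>v v) ^ 2) = cinner (U *\<^sub>v v) (U *\<^sub>v v)" by (simp add: cinner_self)
  also have "\<dots> = cinner (adj U *\<^sub>v (U *\<^sub>v v)) v" using U assms by (simp add: cinner_mult_adj)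
  also have "adj U *\<^sub>v (U *\<^sub>v v) = v" using U assms
    by (metis adj_carrier assoc_mult_mat_vec one_mult_mat_vec)
  also have "cinner v v = complex_of_real (vnorm v ^ 2)" by (simp add: cinner_self)
  finally have "vnorm (U *\<^sub>v v) ^ 2 = vnorm v ^ 2" by (simp only: of_real_eq_iff)
  thus ?thesis using vnorm_nonneg by (simp add: power2_eq_iff_nonneg)
qed

lemma vnorm_col_unitary: assumes "unitary n U" "i < n" shows "vnorm (col U i) = 1"
proof -
  have U: "U \<in> carrier_mat n n" "adj U * U = 1\<^sub>m n" using assms unfolding unitary_def by auto
  have "complex_of_real (vnorm (col U i) ^ 2) = cinner (col U i) (col U i)" by (simp add: cinner_self)
  also have "\<dots> = 1" using cinner_col[OF U(1) U(1) assms(2) assms(2)] U assms by simp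
  finally have "vnorm (col U i) ^ 2 = 1" by (metis of_real_eq_1_iff)
  thus ?thesis using vnorm_nonneg[of "col U i"] by (auto simp: power2_eq_1_iff)
qed

lemma col_eigenvector: assumes U: "U \<in> carrier_mat n n" and M: "M \<in> carrier_mat n n"
  and MU: "M * U = U * dmat n lam" and i: "i < n"
  shows "M *\<^sub>v col U i = complex_of_real (lam i) \<cdot>\<^sub>v col U i"
proof -
  have "M *\<^sub>v col U i = col (M * U) i" by (rule col_mult2[symmetric]) (use U M i in auto)
  also have "\<dots> = col (U * dmat n lam) i" by (simp add: MU)
  also have "\<dots> = complex_of_real (lam i) \<cdot>\<^sub>v col U i"
  proof (rule eq_vecI)
    fix k assume "k < dim_vec (complex_of_real (lam i) \<cdot>\<^sub>v col U i)"
    hence k: "k < n" using U by simp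
    have "col (U * dmat n lam) i $ k = (\<Sum>l<n. U $$ (k,l) * dmat n lam $$ (l,i))"
      using U i k by (simp add: index_mult_mat_sum del: index_mult_mat(1))
    also have "\<dots> = (\<Sum>l\<in>{i}. U $$ (k,l) * dmat n lam $$ (l,i))"
      by (rule sum.mono_neutral_right) (use i in auto)
    finally show "col (U * dmat n lam) i $ k = (complex_of_real (lam i) \<cdot>\<^sub>v col U i) $ k"
      using U i k by simp
  qed (use U in auto)
  finally show ?thesis .
qed

lemma eigenvalue_adj_mult_self: assumes U: "unitary n U" and B: "B \<in> carrier_mat n n"
  and MU: "adj B * B * U = U * dmat n lam" and i: "i < n"
  shows "lam i = vnorm (B *\<^sub>v col U i) ^ 2"
proof -
  have Uc: "U \<in> carrier_mat n n" using U unfolding unitary_def by auto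
  have ci: "col U i \<in> carrier_vec n" using Uc col_dim[of U i] by simp
  have "complex_of_real (lam i) = complex_of_real (lam i) * cinner (col U i) (col U i)"
    using vnorm_col_unitary[OF U i] by (simp add: cinner_self)
  also have "\<dots> = cinner (col U i) ((adj B * B) *\<^sub>v col U i)"
  proof -
    have "adj B * B \<in> carrier_mat n n" using B by (metis adj_carrier mult_carrier_mat)
    from col_eigenvector[OF Uc this MU i] show ?thesis by (simp add: cinner_smult_right)
  qed
  also have "\<dots> = cinner (col U i) (adj B *\<^sub>v (B *\<^sub>v col U i))" using B ci by (metis adj_carrier assoc_mult_mat_vec)
  also have "\<dots> = cinner (B *\<^sub>v col U i) (B *\<^sub>v col U i)"
    using B ci by (subst cinner_mult_adj[of "adj B" n n]) auto
  also have "\<dots> = complex_of_real (vnorm (B *\<^sub>v col U i) ^ 2)" by (simp add: cinner_self)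
  finally show ?thesis by (simp only: of_real_eq_iff)
qed

section \<open>Positive square roots and the trace norm\<close>

lemma psd_cinner: assumes "psd n P" "v \<in> carrier_vec n"
  shows "cinner v (P *\<^sub>v v) = complex_of_real (Re (cinner v (P *\<^sub>v v))) \<and> Re (cinner v (P *\<^sub>v v)) \<ge> 0"
proof -
  have P: "P \<in> carrier_mat n n" using assms by (simp add: psd_def)
  have q: "quad P v = cinner v (P *\<^sub>v v)" by (rule quad_eq_cinner[OF P assms(2)])
  from assms have "Im (quad P v) = 0 \<and> Re (quad P v) \<ge> 0" unfolding psd_def by blast
  thus ?thesis unfolding q by (auto simp: complex_eq_iff)
qed

lemma psd_eigenvector_sqrt: assumes P: "psd n P" and x: "x \<in> carrier_vec n" and lam: "lam \<ge> 0"
  and Px: "P *\<^sub>v (P *\<^sub>v x) = complex_of_real lam \<cdot>\<^sub>v x"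
  shows "P *\<^sub>v x = complex_of_real (sqrt lam) \<cdot>\<^sub>v x"
proof -
  have Pc: "P \<in> carrier_mat n n" and Ph: "adj P = P" using P by (auto simp: psd_def)
  define s where "s = sqrt lam"
  have s0: "s \<ge> 0" and ss: "s * s = lam" using lam unfolding s_def by auto
  define y where "y = P *\<^sub>v x - complex_of_real s \<cdot>\<^sub>v x"
  have yc: "y \<in> carrier_vec n" unfolding y_def using Pc x by simp
  have Py: "P *\<^sub>v y = - complex_of_real s \<cdot>\<^sub>v y"
  proof -
    have "P *\<^sub>v y = P *\<^sub>v (P *\<^sub>v x) - complex_of_real s \<cdot>\<^sub>v (P *\<^sub>v x)"
      unfolding y_def using Pc x by (simp add: mult_minus_distrib_mat_vec mult_mat_vec)
    also have "\<dots> = - complex_of_real s \<cdot>\<^sub>v y"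
      unfolding Px y_def using Pc x ss
      by (intro eq_vecI) (auto simp: algebra_simps of_real_mult[symmetric] simp del: of_real_mult)
    finally show ?thesis .
  qed
  have "y = 0\<^sub>v n"
  proof (cases "s = 0")
    case True
    hence Py0: "P *\<^sub>v y = 0\<^sub>v n" using Py yc by auto
    have yP: "y = P *\<^sub>v x" unfolding y_def using True Pc x by auto
    have "complex_of_real (vnorm y ^ 2) = cinner y y" by (simp add: cinner_self)
    also have "\<dots> = cinner (P *\<^sub>v x) y" using yP by simp
    also have "\<dots> = cinner x (P *\<^sub>v y)" using Pc x yc Ph by (metis cinner_mult_adj)
    also have "\<dots> = 0" unfolding Py0 by (simp add: cinner_def)
    finally have "vnorm y = 0" by simp
    thus ?thesis using vnorm_zero_iff[of y] yc by simp
  next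
    case False
    hence sp: "s > 0" using s0 by simp
    have "cinner y (P *\<^sub>v y) = - complex_of_real s * complex_of_real (vnorm y ^ 2)"
      unfolding Py by (simp add: cinner_smult_right cinner_self)
    moreover have "Re (cinner y (P *\<^sub>v y)) \<ge> 0" using psd_cinner[OF P yc] by simp
    ultimately have "- s * vnorm y ^ 2 \<ge> 0" by simp
    hence "vnorm y ^ 2 \<le> 0" using sp by (simp add: mult_le_0_iff)
    hence "vnorm y = 0" by simp
    thus ?thesis using vnorm_zero_iff[of y] yc by simp
  qed
  hence "P *\<^sub>v x - complex_of_real s \<cdot>\<^sub>v x = 0\<^sub>v n" unfolding y_def .
  hence "\<And>k. k < n \<Longrightarrow> (P *\<^sub>v x) $ k - (complex_of_real s \<cdot>\<^sub>v x) $ k = 0"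
    using Pc x by (metis carrier_vecD index_minus_vec(1) index_zero_vec(1) smult_carrier_vec)
  thus ?thesis unfolding s_def[symmetric] using Pc x by (intro eq_vecI) auto
qed

lemma unitary_cancel: assumes "unitary n U" "X \<in> carrier_mat n n"
  shows "adj U * (U * X) = X" "U * (adj U * X) = X"
  using assms unfolding unitary_def by (auto simp: assoc_mult_mat[of _ n n _ n _ n, symmetric])

lemma mat_eq_on_unitary_cols: assumes U: "unitary n U" and P: "P \<in> carrier_mat n n" and Q: "Q \<in> carrier_mat n n"
  and PQ: "\<And>i. i < n \<Longrightarrow> P *\<^sub>v col U i = Q *\<^sub>v col U i"
  shows "P = Q"
proof -
  have Uc: "U \<in> carrier_mat n n" and Ui: "U * adj U = 1\<^sub>m n" using U unfolding unitary_def by auto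
  have PU: "P * U = Q * U"
  proof (rule eq_matI)
    fix k i assume "k < dim_row (Q * U)" "i < dim_col (Q * U)"
    hence k: "k < n" and i: "i < n" using Q Uc by auto
    have "(P * U) $$ (k,i) = (P *\<^sub>v col U i) $ k" using P Uc k i by simp
    also have "\<dots> = (Q *\<^sub>v col U i) $ k" using PQ[OF i] by simp
    also have "\<dots> = (Q * U) $$ (k,i)" using Q Uc k i by simp
    finally show "(P * U) $$ (k,i) = (Q * U) $$ (k,i)" .
  qed (use P Q in auto)
  have "P = P * U * adj U" using P Uc Ui by (metis adj_carrier assoc_mult_mat right_mult_one_mat)
  also have "\<dots> = Q * U * adj U" by (simp add: PU)
  also have "\<dots> = Q" using Q Uc Ui by (metis adj_carrier assoc_mult_mat right_mult_one_mat)
  finally show ?thesis .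
qed

lemma psd_sqrt_unique: assumes P: "psd n P" and Q: "psd n Q" and PQ: "P * P = Q * Q"
  shows "P = Q"
proof -
  have Pc: "P \<in> carrier_mat n n" and Qc: "Q \<in> carrier_mat n n" and Qh: "adj Q = Q"
    using P Q by (auto simp: psd_def)
  define M where "M = Q * Q"
  have Mc: "M \<in> carrier_mat n n" unfolding M_def using Qc by simp
  have Mh: "adj M = M" unfolding M_def using Qc Qh by (simp add: adj_mult)
  obtain U lam where U: "unitary n U" and MU: "M * U = U * dmat n lam"
    using hermitian_diagonalization[OF Mc Mh] by blast
  have Uc: "U \<in> carrier_mat n n" using U unfolding unitary_def by auto
  have MU': "adj Q * Q * U = U * dmat n lam" using MU Qh unfolding M_def by simp
  show ?thesis
  proof (rule mat_eq_on_unitary_cols[OF U Pc Qc])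
    fix i assume i: "i < n"
    have ci: "col U i \<in> carrier_vec n" using Uc col_dim[of U i] by simp
    have lam: "lam i \<ge> 0" using eigenvalue_adj_mult_self[OF U Qc MU' i] by simp
    have ev: "M *\<^sub>v col U i = complex_of_real (lam i) \<cdot>\<^sub>v col U i" by (rule col_eigenvector[OF Uc Mc MU i])
    have "P *\<^sub>v (P *\<^sub>v col U i) = complex_of_real (lam i) \<cdot>\<^sub>v col U i"
      using ev ci Pc unfolding M_def PQ[symmetric] by (metis assoc_mult_mat_vec)
    from psd_eigenvector_sqrt[OF P ci lam this]
    have "P *\<^sub>v col U i = complex_of_real (sqrt (lam i)) \<cdot>\<^sub>v col U i" .
    moreover have "Q *\<^sub>v (Q *\<^sub>v col U i) = complex_of_real (lam i) \<cdot>\<^sub>v col U i"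
      using ev ci Qc unfolding M_def by (metis assoc_mult_mat_vec)
    from psd_eigenvector_sqrt[OF Q ci lam this]
    have "Q *\<^sub>v col U i = complex_of_real (sqrt (lam i)) \<cdot>\<^sub>v col U i" .
    ultimately show "P *\<^sub>v col U i = Q *\<^sub>v col U i" by simp
  qed
qed

lemma psd_sqrt_diagonal: assumes U: "unitary n U" and lam: "\<And>i. i < n \<Longrightarrow> lam i \<ge> 0"
  and M: "M \<in> carrier_mat n n" and MU: "M * U = U * dmat n lam"
  defines "S \<equiv> U * dmat n (\<lambda>i. sqrt (lam i)) * adj U"
  shows "psd n S" "S * S = M"
proof -
  have Uc: "U \<in> carrier_mat n n" and Ui: "adj U * U = 1\<^sub>m n" and Ui': "U * adj U = 1\<^sub>m n"
    using U unfolding unitary_def by auto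
  define D where "D = dmat n (\<lambda>i. sqrt (lam i))"
  have Dc: "D \<in> carrier_mat n n" unfolding D_def by simp
  have Sc: "S \<in> carrier_mat n n" unfolding S_def using Uc by (metis adj_carrier mult_carrier_mat dmat_carrier)
  have DD: "D * D = dmat n lam"
    unfolding D_def dmat_mult
    by (rule eq_matI) (auto simp: lam real_sqrt_mult[symmetric])
  have "S * S = U * (D * (adj U * (U * (D * adj U))))" unfolding S_def D_def[symmetric]
    using Uc Dc by (simp add: assoc_mult_mat[of _ n n _ n _ n] mult_carrier_mat[of _ n n _ n])
  also have "\<dots> = U * ((D * D) * adj U)" using Uc Dc U
    by (simp add: assoc_mult_mat[of _ n n _ n _ n] mult_carrier_mat[of _ n n _ n] unitary_cancel)
  also have "\<dots> = (M * U) * adj U" unfolding DD MU using Uc by (simp add: assoc_mult_mat[of _ n n _ n _ n])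
  also have "\<dots> = M" using M Uc Ui' by (simp add: assoc_mult_mat[of _ n n _ n _ n])
  finally show "S * S = M" .
  have Sh: "adj S = S" unfolding S_def D_def[symmetric] using Uc Dc
    by (simp add: adj_mult assoc_mult_mat[of _ n n _ n _ n] mult_carrier_mat[of _ n n _ n] D_def)
  have "Im (quad S v) = 0 \<and> Re (quad S v) \<ge> 0" if v: "v \<in> carrier_vec n" for v
  proof -
    define w where "w = adj U *\<^sub>v v"
    have wc: "w \<in> carrier_vec n" unfolding w_def using Uc v by (simp add: mult_mat_vec_carrier[of _ n n])
    have "quad S v = cinner v (S *\<^sub>v v)" by (rule quad_eq_cinner[OF Sc v])
    also have "\<dots> = cinner v (U *\<^sub>v (D *\<^sub>v w))" unfolding S_def D_def[symmetric] w_def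
      using Uc Dc v by (simp add: assoc_mult_mat_vec[of _ n n _ n] mult_carrier_mat[of _ n n _ n] mult_mat_vec_carrier[of _ n n])
    also have "\<dots> = cinner w (D *\<^sub>v w)" unfolding w_def using Uc Dc v
      by (subst cinner_mult_adj[of U n n]) (auto simp: mult_mat_vec_carrier[of _ n n])
    also have "\<dots> = complex_of_real (\<Sum>i<n. sqrt (lam i) * (cmod (w $ i))^2)"
      unfolding D_def by (rule cinner_dmat[OF wc])
    finally show ?thesis using lam by (auto intro!: sum_nonneg)
  qed
  thus "psd n S" unfolding psd_def using Sc Sh by blast
qed

lemma abs_mat_eqI: assumes A: "A \<in> carrier_mat n n" and P: "psd n P" and PA: "P * P = adj A * A"
  shows "abs_mat A = P"
proof -
  have dc: "dim_col A = n" using A by simp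
  show ?thesis unfolding abs_mat_def dc
  proof (rule the_equality)
    show "psd n P \<and> P * P = adj A * A" using P PA by simp
  next
    fix Q assume "psd n Q \<and> Q * Q = adj A * A"
    thus "Q = P" using psd_sqrt_unique[of n Q P] P PA by simp
  qed
qed

lemma abs_mat_diagonalization: assumes A: "A \<in> carrier_mat n n" and U: "unitary n U"
  and lam: "\<And>i. i < n \<Longrightarrow> lam i \<ge> 0" and MU: "adj A * A * U = U * dmat n lam"
  shows "abs_mat A = U * dmat n (\<lambda>i. sqrt (lam i)) * adj U"
    "trace_norm A = (\<Sum>i<n. sqrt (lam i))"
proof -
  have Mc: "adj A * A \<in> carrier_mat n n" using A by (metis adj_carrier mult_carrier_mat)
  note S = psd_sqrt_diagonal[OF U lam Mc MU]
  show ab: "abs_mat A = U * dmat n (\<lambda>i. sqrt (lam i)) * adj U"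
    by (rule abs_mat_eqI[OF A S])
  have Uc: "U \<in> carrier_mat n n" and Ui: "adj U * U = 1\<^sub>m n" using U unfolding unitary_def by auto
  have "mtrace (U * dmat n (\<lambda>i. sqrt (lam i)) * adj U) = mtrace (U * (dmat n (\<lambda>i. sqrt (lam i)) * adj U))"
    using Uc by (metis adj_carrier assoc_mult_mat dmat_carrier)
  also have "\<dots> = mtrace ((dmat n (\<lambda>i. sqrt (lam i)) * adj U) * U)"
    using Uc by (intro mtrace_cyclic) (auto intro: mult_carrier_mat)
  also have "\<dots> = mtrace (dmat n (\<lambda>i. sqrt (lam i)) * (adj U * U))"
    using Uc by (metis adj_carrier assoc_mult_mat dmat_carrier)
  also have "\<dots> = complex_of_real (\<Sum>i<n. sqrt (lam i))" using Ui by (simp add: mtrace_dmat)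
  finally show "trace_norm A = (\<Sum>i<n. sqrt (lam i))" unfolding trace_norm_def ab by simp
qed

lemma adj_mult_self_diagonalization: assumes A: "A \<in> carrier_mat n n"
  shows "\<exists>U lam. unitary n U \<and> (\<forall>i<n. lam i \<ge> 0) \<and> adj A * A * U = U * dmat n lam"
proof -
  have Mc: "adj A * A \<in> carrier_mat n n" using A by (metis adj_carrier mult_carrier_mat)
  have Mh: "adj (adj A * A) = adj A * A" using A by (simp add: adj_mult)
  obtain U lam where U: "unitary n U" and MU: "adj A * A * U = U * dmat n lam"
    using hermitian_diagonalization[OF Mc Mh] by blast
  have "\<forall>i<n. lam i \<ge> 0" using eigenvalue_adj_mult_self[OF U A MU] by simp
  thus ?thesis using U MU by blast
qed

section \<open>Operator norm\<close>

lemma norm_index_le_vnorm: "k < dim_vec v \<Longrightarrow> cmod (v $ k) \<le> vnorm v"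
  unfolding vnorm_L2 by (rule member_le_L2_set) auto

definition entry_norm_sum :: "complex mat \<Rightarrow> real" where
  "entry_norm_sum X = (\<Sum>i<dim_row X. \<Sum>k<dim_col X. cmod (X $$ (i,k)))"

lemma vnorm_mult_le_entry_norm_sum: assumes v: "v \<in> carrier_vec (dim_col X)"
  shows "vnorm (X *\<^sub>v v) \<le> entry_norm_sum X * vnorm v"
proof -
  have "vnorm (X *\<^sub>v v) \<le> (\<Sum>i<dim_row X. \<bar>cmod ((X *\<^sub>v v) $ i)\<bar>)"
    unfolding vnorm_L2 dim_mult_mat_vec by (rule L2_set_le_sum_abs)
  also have "\<dots> \<le> (\<Sum>i<dim_row X. \<Sum>k<dim_col X. cmod (X $$ (i,k)) * vnorm v)"
  proof (rule sum_mono)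
    fix i assume i: "i \<in> {..<dim_row X}"
    have "\<bar>cmod ((X *\<^sub>v v) $ i)\<bar> = cmod (\<Sum>k<dim_col X. X $$ (i,k) * v $ k)"
      using i v by (simp add: index_mult_mat_vec_sum del: index_mult_mat_vec)
    also have "\<dots> \<le> (\<Sum>k<dim_col X. cmod (X $$ (i,k) * v $ k))" by (rule norm_sum)
    also have "\<dots> \<le> (\<Sum>k<dim_col X. cmod (X $$ (i,k)) * vnorm v)"
      using v by (intro sum_mono) (auto simp: norm_mult intro!: mult_left_mono norm_index_le_vnorm)
    finally show "\<bar>cmod ((X *\<^sub>v v) $ i)\<bar> \<le> (\<Sum>k<dim_col X. cmod (X $$ (i,k)) * vnorm v)" .
  qed
  also have "\<dots> = entry_norm_sum X * vnorm v" unfolding entry_norm_sum_def by (simp add: sum_distrib_right)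
  finally show ?thesis .
qed

lemma mult_mat_vec_zero_vec[simp]: "A *\<^sub>v 0\<^sub>v (dim_col A) = 0\<^sub>v (dim_row A)"
  by (rule eq_vecI) (auto simp: scalar_prod_def)

definition op_norm_set :: "complex mat \<Rightarrow> real set" where
  "op_norm_set A = {vnorm (A *\<^sub>v v) | v. v \<in> carrier_vec (dim_col A) \<and> vnorm v \<le> 1}"

lemma op_norm_eq_Sup: "op_norm A = Sup (op_norm_set A)" unfolding op_norm_def op_norm_set_def ..

lemma bdd_above_op_norm_set: "bdd_above (op_norm_set A)"
proof -
  have "entry_norm_sum A \<ge> 0" unfolding entry_norm_sum_def by (auto intro!: sum_nonneg)
  hence "x \<le> entry_norm_sum A" if "x \<in> op_norm_set A" for x
    using that vnorm_mult_le_entry_norm_sum unfolding op_norm_set_def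
    by (auto intro: order_trans[OF vnorm_mult_le_entry_norm_sum] mult_left_le)
  thus ?thesis by (intro bdd_aboveI[of _ "entry_norm_sum A"]) blast
qed

lemma zero_in_op_norm_set: "0 \<in> op_norm_set A"
proof -
  have "vnorm (A *\<^sub>v 0\<^sub>v (dim_col A)) = 0" by (simp add: vnorm_zero_iff)
  moreover have "vnorm (0\<^sub>v (dim_col A)) = 0" by (simp add: vnorm_zero_iff)
  ultimately show ?thesis unfolding op_norm_set_def
    by (intro CollectI exI[of _ "0\<^sub>v (dim_col A)"]) auto
qed

lemma op_norm_nonneg: "op_norm A \<ge> 0"
  unfolding op_norm_eq_Sup using zero_in_op_norm_set bdd_above_op_norm_set by (rule cSup_upper)

lemma vnorm_mult_le_op_norm: assumes v: "v \<in> carrier_vec (dim_col A)"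
  shows "vnorm (A *\<^sub>v v) \<le> op_norm A * vnorm v"
proof (cases "vnorm v = 0")
  case True
  hence "v = 0\<^sub>v (dim_col A)" using vnorm_zero_iff[of v] v by simp
  hence "vnorm (A *\<^sub>v v) = 0" by (simp add: vnorm_zero_iff)
  thus ?thesis using True by simp
next
  case False
  hence p: "vnorm v > 0" using vnorm_nonneg[of v] by simp
  define w where "w = complex_of_real (1 / vnorm v) \<cdot>\<^sub>v v"
  have wn: "vnorm w = 1" unfolding w_def vnorm_smult using p by (simp add: norm_divide)
  have wc: "w \<in> carrier_vec (dim_col A)" unfolding w_def using v by simp
  have "vnorm (A *\<^sub>v w) \<in> op_norm_set A" unfolding op_norm_set_def using wn wc by auto
  hence le: "vnorm (A *\<^sub>v w) \<le> op_norm A" unfolding op_norm_eq_Sup using bdd_above_op_norm_set by (rule cSup_upper)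
  have "A *\<^sub>v w = complex_of_real (1 / vnorm v) \<cdot>\<^sub>v (A *\<^sub>v v)"
    unfolding w_def using v by (metis carrier_matI mult_mat_vec)
  hence "vnorm (A *\<^sub>v w) = vnorm (A *\<^sub>v v) / vnorm v" using p by (simp add: vnorm_smult norm_divide)
  with le p show ?thesis by (simp add: divide_le_eq mult.commute)
qed

lemma op_norm_leI: assumes c: "c \<ge> 0" and h: "\<And>v. v \<in> carrier_vec (dim_col A) \<Longrightarrow> vnorm (A *\<^sub>v v) \<le> c * vnorm v"
  shows "op_norm A \<le> c"
  unfolding op_norm_eq_Sup
proof (rule cSup_least)
  show "op_norm_set A \<noteq> {}" using zero_in_op_norm_set by auto
  fix x assume "x \<in> op_norm_set A"
  then obtain v where v: "v \<in> carrier_vec (dim_col A)" "vnorm v \<le> 1" and x: "x = vnorm (A *\<^sub>v v)"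
    unfolding op_norm_set_def by auto
  have "x \<le> c * vnorm v" using h[OF v(1)] x by simp
  also have "\<dots> \<le> c" using v(2) c by (simp add: mult_left_le)
  finally show "x \<le> c" .
qed

lemma op_norm_one_le: "op_norm (1\<^sub>m n) \<le> 1"
  by (rule op_norm_leI) auto

section \<open>Trace duality\<close>

lemma mtrace_eq_sum_cols_unitary: assumes U: "unitary n U" and B: "B \<in> carrier_mat n n"
  shows "mtrace B = (\<Sum>i<n. cinner (col U i) (B *\<^sub>v col U i))"
proof -
  have Uc: "U \<in> carrier_mat n n" and Ui': "U * adj U = 1\<^sub>m n" using U unfolding unitary_def by auto
  have "B = (B * U) * adj U" using B Uc Ui' by (simp add: assoc_mult_mat[of _ n n _ n _ n])
  hence "mtrace B = mtrace ((B * U) * adj U)" by simp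
  also have "\<dots> = mtrace (adj U * (B * U))" using B Uc by (intro mtrace_cyclic) auto
  also have "adj U * (B * U) = adj U * B * U" using B Uc by (simp add: assoc_mult_mat[of _ n n _ n _ n])
  also have "mtrace (adj U * B * U) = (\<Sum>i<n. (adj U * B * U) $$ (i,i))"
    unfolding mtrace_def using Uc B by simp
  also have "\<dots> = (\<Sum>i<n. cinner (col U i) (B *\<^sub>v col U i))"
    using index_adj_mult_mult[OF Uc B Uc] by simp
  finally show ?thesis .
qed

lemma trace_mult_le_trace_norm_op_norm: assumes S: "S \<in> carrier_mat n n" and X: "X \<in> carrier_mat n n"
  shows "cmod (mtrace (S * X)) \<le> trace_norm S * op_norm X"
proof -
  obtain U lam where U: "unitary n U" and lam: "\<forall>i<n. lam i \<ge> 0" and MU: "adj S * S * U = U * dmat n lam"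
    using adj_mult_self_diagonalization[OF S] by blast
  have Uc: "U \<in> carrier_mat n n" using U unfolding unitary_def by auto
  have tn: "trace_norm S = (\<Sum>i<n. sqrt (lam i))" using abs_mat_diagonalization[OF S U _ MU] lam by simp
  have "mtrace (S * X) = mtrace (X * S)" using S X by (rule mtrace_cyclic)
  also have "\<dots> = (\<Sum>i<n. cinner (col U i) ((X * S) *\<^sub>v col U i))"
    using mtrace_eq_sum_cols_unitary[OF U] S X by simp
  finally have tr: "mtrace (S * X) = (\<Sum>i<n. cinner (col U i) ((X * S) *\<^sub>v col U i))" .
  have "cmod (cinner (col U i) ((X * S) *\<^sub>v col U i)) \<le> op_norm X * sqrt (lam i)" if i: "i < n" for i
  proof -
    have ci: "col U i \<in> carrier_vec n" using Uc col_dim[of U i] by simp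
    have "cmod (cinner (col U i) ((X * S) *\<^sub>v col U i)) \<le> vnorm (col U i) * vnorm ((X * S) *\<^sub>v col U i)"
      using ci X S Uc by (intro cinner_cauchy_schwarz) simp
    also have "(X * S) *\<^sub>v col U i = X *\<^sub>v (S *\<^sub>v col U i)" using X S ci by (simp add: assoc_mult_mat_vec[of _ n n _ n])
    also have "vnorm (col U i) = 1" using vnorm_col_unitary[OF U i] .
    also have "vnorm (X *\<^sub>v (S *\<^sub>v col U i)) \<le> op_norm X * vnorm (S *\<^sub>v col U i)"
      using X S ci by (intro vnorm_mult_le_op_norm) (simp add: mult_mat_vec_carrier[of _ n n])
    also have "vnorm (S *\<^sub>v col U i) = sqrt (lam i)"
      using eigenvalue_adj_mult_self[OF U S MU i] vnorm_nonneg by simp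
    finally show ?thesis using X S ci by (simp add: assoc_mult_mat_vec[of _ n n _ n])
  qed
  hence "cmod (mtrace (S * X)) \<le> (\<Sum>i<n. op_norm X * sqrt (lam i))"
    unfolding tr by (intro order_trans[OF norm_sum] sum_mono) auto
  also have "\<dots> = trace_norm S * op_norm X" unfolding tn by (simp add: sum_distrib_left mult.commute)
  finally show ?thesis .
qed

definition outer_mat :: "nat \<Rightarrow> complex vec \<Rightarrow> complex vec \<Rightarrow> complex mat" where
  "outer_mat n w z = mat n n (\<lambda>(i,j). w $ i * cnj (z $ j))"

lemma outer_mat_carrier[simp]: "outer_mat n w z \<in> carrier_mat n n" by (simp add: outer_mat_def)

lemma outer_mat_index[simp]: "i < n \<Longrightarrow> j < n \<Longrightarrow> outer_mat n w z $$ (i,j) = w $ i * cnj (z $ j)"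
  by (simp add: outer_mat_def)

lemma outer_mat_dim[simp]: "dim_row (outer_mat n w z) = n" "dim_col (outer_mat n w z) = n" by (simp_all add: outer_mat_def)

lemma sum_cnj_mult_self: "v \<in> carrier_vec n \<Longrightarrow> (\<Sum>k<n. cnj (v $ k) * v $ k) = complex_of_real (vnorm v ^ 2)"
  using cinner_self[of v] unfolding cinner_def by simp

lemma mtrace_outer_mat_mult: assumes w: "w \<in> carrier_vec n" and z: "z \<in> carrier_vec n" and Y: "Y \<in> carrier_mat n n"
  shows "mtrace (outer_mat n w z * Y) = cinner z (Y *\<^sub>v w)"
proof -
  have "mtrace (outer_mat n w z * Y) = (\<Sum>i<n. \<Sum>k<n. w $ i * cnj (z $ k) * Y $$ (k,i))"
    unfolding mtrace_def using Y by (simp add: index_mult_mat_sum del: index_mult_mat(1))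
  also have "\<dots> = (\<Sum>k<n. \<Sum>i<n. cnj (z $ k) * (Y $$ (k,i) * w $ i))"
    by (subst sum.swap) (simp add: mult_ac)
  also have "\<dots> = cinner z (Y *\<^sub>v w)"
    unfolding cinner_def using Y w by (simp add: index_mult_mat_vec_sum sum_distrib_left del: index_mult_mat_vec)
  finally show ?thesis .
qed

lemma psd_zero: "psd n (0\<^sub>m n n)"
  unfolding psd_def by (auto simp: quad_def scalar_prod_def)

lemma trace_norm_zero: "trace_norm (0\<^sub>m n n) = 0"
proof -
  have "abs_mat (0\<^sub>m n n) = 0\<^sub>m n n" by (rule abs_mat_eqI[OF _ psd_zero]) auto
  thus ?thesis unfolding trace_norm_def by (simp add: mtrace_zero)
qed

lemma psd_smult_outer_mat_self:
  assumes a: "0 \<le> a" and z: "z \<in> carrier_vec n"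
  shows "psd n (complex_of_real a \<cdot>\<^sub>m outer_mat n z z)" (is "psd n ?P")
  unfolding psd_def
proof (intro conjI ballI)
  show "?P \<in> carrier_mat n n" by simp
  show "adj ?P = ?P" by (rule eq_matI) auto
  fix v :: "complex vec" assume v: "v \<in> carrier_vec n"
  have Pv: "(?P *\<^sub>v v) $ i = complex_of_real a * z $ i * cinner z v" if i: "i < n" for i
    using i v by (simp add: index_mult_mat_vec_sum cinner_def sum_distrib_left mult_ac del: index_mult_mat_vec)
  have "quad ?P v = (\<Sum>i<n. cnj (v $ i) * (complex_of_real a * z $ i * cinner z v))"
    using Pv v by (auto simp: quad_def intro!: sum.cong)
  also have "\<dots> = complex_of_real a * cinner z v * (\<Sum>i<n. cnj (v $ i) * z $ i)"
    by (simp add: sum_distrib_left mult_ac)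
  also have "(\<Sum>i<n. cnj (v $ i) * z $ i) = cnj (cinner z v)"
    unfolding cinner_def using v by (simp add: mult.commute)
  also have "complex_of_real a * cinner z v * cnj (cinner z v) = complex_of_real (a * (cmod (cinner z v))^2)"
    using cnj_mult_self[of "cinner z v"] by (simp add: mult_ac)
  finally show "Im (quad ?P v) = 0" "0 \<le> Re (quad ?P v)" using a by simp_all
qed

lemma trace_norm_outer_mat: assumes w: "w \<in> carrier_vec n" and z: "z \<in> carrier_vec n"
  shows "trace_norm (outer_mat n w z) = vnorm w * vnorm z"
proof (cases "vnorm z = 0")
  case True
  hence z0: "z = 0\<^sub>v n" using vnorm_zero_iff[of z] z by simp
  have "outer_mat n w z = 0\<^sub>m n n" unfolding z0 by (rule eq_matI) auto
  thus ?thesis using True trace_norm_zero by simp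
next
  case False
  hence zp: "vnorm z > 0" using vnorm_nonneg[of z] by simp
  define a where "a = vnorm w / vnorm z"
  have a0: "a \<ge> 0" unfolding a_def using zp vnorm_nonneg[of w] by simp
  define P where "P = complex_of_real a \<cdot>\<^sub>m outer_mat n z z"
  have zz: "(\<Sum>k<n. z $ k * cnj (z $ k)) = complex_of_real (vnorm z ^ 2)"
    using sum_cnj_mult_self[OF z] by (simp add: mult.commute)
  have ww: "(\<Sum>k<n. cnj (w $ k) * w $ k) = complex_of_real (vnorm w ^ 2)"
    using sum_cnj_mult_self[OF w] by simp
  have Pp: "psd n P" unfolding P_def using a0 z by (rule psd_smult_outer_mat_self)
  have PP: "P * P = adj (outer_mat n w z) * outer_mat n w z"
  proof (rule eq_matI)
    fix i j assume "i < dim_row (adj (outer_mat n w z) * outer_mat n w z)" "j < dim_col (adj (outer_mat n w z) * outer_mat n w z)"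
    hence i: "i < n" and j: "j < n" by auto
    have "(P * P) $$ (i,j) = (\<Sum>k<n. complex_of_real a * (z $ i * cnj (z $ k)) * (complex_of_real a * (z $ k * cnj (z $ j))))"
      unfolding P_def using i j by (simp add: index_mult_mat_sum del: index_mult_mat(1))
    also have "\<dots> = complex_of_real (a^2) * z $ i * cnj (z $ j) * (\<Sum>k<n. z $ k * cnj (z $ k))"
      by (simp add: sum_distrib_left power2_eq_square mult_ac)
    also have "\<dots> = complex_of_real (a^2 * vnorm z ^ 2) * z $ i * cnj (z $ j)" unfolding zz by simp
    also have "a^2 * vnorm z ^ 2 = vnorm w ^ 2" unfolding a_def using zp by (simp add: power_divide)
    also have "complex_of_real (vnorm w ^ 2) * z $ i * cnj (z $ j)
       = (\<Sum>k<n. cnj (w $ k * cnj (z $ i)) * (w $ k * cnj (z $ j)))"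
      unfolding ww[symmetric] by (simp add: sum_distrib_left sum_distrib_right mult_ac)
    also have "\<dots> = (adj (outer_mat n w z) * outer_mat n w z) $$ (i,j)"
      using i j by (simp add: index_mult_mat_sum del: index_mult_mat(1))
    finally show "(P * P) $$ (i,j) = (adj (outer_mat n w z) * outer_mat n w z) $$ (i,j)" .
  qed (auto simp: P_def)
  have ab: "abs_mat (outer_mat n w z) = P" by (rule abs_mat_eqI[OF _ Pp PP]) simp
  have "mtrace P = complex_of_real a * (\<Sum>k<n. z $ k * cnj (z $ k))"
    unfolding P_def mtrace_def by (simp add: sum_distrib_left)
  also have "\<dots> = complex_of_real (vnorm w * vnorm z)" unfolding zz a_def using zp
    by (simp add: power2_eq_square)
  finally show ?thesis unfolding trace_norm_def ab by simp
qed

lemma op_norm_le_by_trace_duality: assumes Y: "Y \<in> carrier_mat n n" and c: "c \<ge> 0"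
  and h: "\<And>S. S \<in> carrier_mat n n \<Longrightarrow> cmod (mtrace (S * Y)) \<le> c * trace_norm S"
  shows "op_norm Y \<le> c"
proof (rule op_norm_leI[OF c])
  fix w :: "complex vec" assume "w \<in> carrier_vec (dim_col Y)"
  hence w: "w \<in> carrier_vec n" using Y by simp
  define z where "z = Y *\<^sub>v w"
  have zc: "z \<in> carrier_vec n" unfolding z_def using Y w by simp
  have "mtrace (outer_mat n w z * Y) = complex_of_real (vnorm z ^ 2)"
    using mtrace_outer_mat_mult[OF w zc Y] by (simp add: z_def cinner_self)
  hence "vnorm z ^ 2 \<le> c * (vnorm w * vnorm z)"
    using h[of "outer_mat n w z"] trace_norm_outer_mat[OF w zc] by (simp add: norm_power)
  hence "vnorm z * vnorm z \<le> (c * vnorm w) * vnorm z" by (simp add: power2_eq_square mult_ac)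
  hence "vnorm z \<le> c * vnorm w"
  proof (cases "vnorm z = 0")
    case True thus ?thesis using c vnorm_nonneg[of w] by simp
  next
    case False
    hence "vnorm z > 0" using vnorm_nonneg[of z] by simp
    thus ?thesis using \<open>vnorm z * vnorm z \<le> (c * vnorm w) * vnorm z\<close> by (rule mult_right_le_imp_le[rotated])
  qed
  thus "vnorm (Y *\<^sub>v w) \<le> c * vnorm w" unfolding z_def .
qed

lemma trace_norm_nonneg: assumes A: "A \<in> carrier_mat n n" shows "trace_norm A \<ge> 0"
proof -
  obtain U lam where U: "unitary n U" and lam: "\<forall>i<n. lam i \<ge> 0" and MU: "adj A * A * U = U * dmat n lam"
    using adj_mult_self_diagonalization[OF A] by blast
  have "trace_norm A = (\<Sum>i<n. sqrt (lam i))" using abs_mat_diagonalization[OF A U _ MU] lam by simp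
  thus ?thesis using lam by (auto intro!: sum_nonneg)
qed

lemma vnorm_adj_partial_isometry: assumes Q: "Q \<in> carrier_mat n n" and PP: "(Q * adj Q) * (Q * adj Q) = Q * adj Q"
  and w: "w \<in> carrier_vec n"
  shows "vnorm (adj Q *\<^sub>v w) \<le> vnorm w"
proof -
  define P where "P = Q * adj Q"
  have Pc: "P \<in> carrier_mat n n" unfolding P_def using Q by (simp add: mult_carrier_mat[of _ n n _ n])
  have Ph: "adj P = P" unfolding P_def using Q by (simp add: adj_mult)
  have PP': "P * P = P" using PP unfolding P_def .
  have aw: "adj Q *\<^sub>v w \<in> carrier_vec n" using Q w by (simp add: mult_mat_vec_carrier[of _ n n])
  have Pw: "P *\<^sub>v w \<in> carrier_vec n" using Pc w by simp
  have "complex_of_real (vnorm (adj Q *\<^sub>v w) ^ 2) = cinner (adj Q *\<^sub>v w) (adj Q *\<^sub>v w)" by (simp add: cinner_self)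
  also have "\<dots> = cinner (adj (adj Q) *\<^sub>v (adj Q *\<^sub>v w)) w"
    using Q w aw by (intro cinner_mult_adj[of "adj Q" n n]) auto
  also have "adj (adj Q) *\<^sub>v (adj Q *\<^sub>v w) = P *\<^sub>v w" unfolding P_def using Q w
    by (simp add: assoc_mult_mat_vec[of _ n n _ n])
  finally have a: "complex_of_real (vnorm (adj Q *\<^sub>v w) ^ 2) = cinner (P *\<^sub>v w) w" .
  have "complex_of_real (vnorm (P *\<^sub>v w) ^ 2) = cinner (P *\<^sub>v w) (P *\<^sub>v w)" by (simp add: cinner_self)
  also have "\<dots> = cinner (adj P *\<^sub>v (P *\<^sub>v w)) w" using Pc w Pw by (intro cinner_mult_adj[of P n n]) auto
  also have "adj P *\<^sub>v (P *\<^sub>v w) = P *\<^sub>v w" unfolding Ph using Pc w PP'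
    by (simp add: assoc_mult_mat_vec[of _ n n _ n, symmetric])
  finally have b: "complex_of_real (vnorm (P *\<^sub>v w) ^ 2) = cinner (P *\<^sub>v w) w" .
  have ab: "vnorm (adj Q *\<^sub>v w) ^ 2 = vnorm (P *\<^sub>v w) ^ 2"
    by (subst of_real_eq_iff[symmetric, where 'a=complex]) (rule trans[OF a b[symmetric]])
  have "vnorm (P *\<^sub>v w) ^ 2 = cmod (cinner (P *\<^sub>v w) w)" unfolding b[symmetric]
    by (simp only: norm_of_real abs_power2)
  also have "\<dots> \<le> vnorm (P *\<^sub>v w) * vnorm w" using Pc Pw w by (intro cinner_cauchy_schwarz) simp
  finally have "vnorm (P *\<^sub>v w) * vnorm (P *\<^sub>v w) \<le> vnorm w * vnorm (P *\<^sub>v w)"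
    by (simp add: power2_eq_square mult.commute)
  hence pw: "vnorm (P *\<^sub>v w) \<le> vnorm w"
  proof (cases "vnorm (P *\<^sub>v w) = 0")
    case True thus ?thesis using vnorm_nonneg[of w] by simp
  next
    case False
    hence "vnorm (P *\<^sub>v w) > 0" using vnorm_nonneg[of "P *\<^sub>v w"] by simp
    thus ?thesis using \<open>vnorm (P *\<^sub>v w) * vnorm (P *\<^sub>v w) \<le> vnorm w * vnorm (P *\<^sub>v w)\<close>
      by (rule mult_right_le_imp_le[rotated])
  qed
  have "vnorm (adj Q *\<^sub>v w) ^ 2 \<le> vnorm w ^ 2" unfolding ab
    using pw vnorm_nonneg by (intro power_mono) auto
  thus ?thesis using vnorm_nonneg by (rule power2_le_imp_le)
qed

definition pinv_sqrt :: "real \<Rightarrow> real" where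
  "pinv_sqrt x = (if x = 0 then 0 else 1 / sqrt x)"

lemma pinv_sqrt_mult: "0 \<le> x \<Longrightarrow> pinv_sqrt x * x = sqrt x"
  by (auto simp: pinv_sqrt_def field_simps real_sqrt_mult_self)

lemma pinv_sqrt_mult_pinv_sqrt: "0 \<le> x \<Longrightarrow> pinv_sqrt x * (pinv_sqrt x * x * pinv_sqrt x) = pinv_sqrt x"
  by (auto simp: pinv_sqrt_def field_simps real_sqrt_mult_self)

lemma op_norm_unitary_mult_adj_le_one:
  assumes U: "unitary n U" and Q: "Q \<in> carrier_mat n n" and partial_isometry: "Q * (adj Q * Q) = Q"
  shows "op_norm (U * adj Q) \<le> 1"
proof (rule op_norm_leI)
  have Uc: "U \<in> carrier_mat n n" using U unfolding unitary_def by blast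
  have "(Q * adj Q) * (Q * adj Q) = (Q * (adj Q * Q)) * adj Q"
    using Q by (simp add: assoc_mult_mat[of _ n n _ n _ n] mult_carrier_mat[of _ n n _ n])
  then have projection: "(Q * adj Q) * (Q * adj Q) = Q * adj Q" by (simp add: partial_isometry)
  fix w :: "complex vec" assume "w \<in> carrier_vec (dim_col (U * adj Q))"
  hence w: "w \<in> carrier_vec n" using Q by simp
  have "vnorm ((U * adj Q) *\<^sub>v w) = vnorm (U *\<^sub>v (adj Q *\<^sub>v w))"
    using Uc Q w by (simp add: assoc_mult_mat_vec[of _ n n _ n])
  also have "\<dots> = vnorm (adj Q *\<^sub>v w)"
    using Q w by (intro vnorm_unitary[OF U]) (simp add: mult_mat_vec_carrier[of _ n n])
  also have "\<dots> \<le> vnorm w" by (rule vnorm_adj_partial_isometry[OF Q projection w])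
  finally show "vnorm ((U * adj Q) *\<^sub>v w) \<le> 1 * vnorm w" by simp
qed simp

lemma trace_norm_dual_witness: assumes A: "A \<in> carrier_mat n n"
  shows "\<exists>Y. Y \<in> carrier_mat n n \<and> op_norm Y \<le> 1 \<and> mtrace (A * Y) = complex_of_real (trace_norm A)"
proof -
  obtain U lam where U: "unitary n U" and lam: "\<forall>i<n. lam i \<ge> 0" and MU: "adj A * A * U = U * dmat n lam"
    using adj_mult_self_diagonalization[OF A] by blast
  have Uc: "U \<in> carrier_mat n n" using U unfolding unitary_def by auto
  have tn: "trace_norm A = (\<Sum>i<n. sqrt (lam i))" using abs_mat_diagonalization[OF A U _ MU] lam by simp
  define Sp where "Sp = dmat n (\<lambda>i. pinv_sqrt (lam i))"
  have Spc: "Sp \<in> carrier_mat n n" unfolding Sp_def by simp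
  \<comment> \<open>\<open>Q U\<^sup>*\<close> is the partial isometry \<open>V\<close> of the polar decomposition \<open>A = V |A|\<close>; the witness is \<open>V\<^sup>*\<close>.\<close>
  define Q where "Q = A * (U * Sp)"
  have Qc: "Q \<in> carrier_mat n n" unfolding Q_def using A Uc Spc by (simp add: mult_carrier_mat[of _ n n _ n])
  have aQ: "adj Q = Sp * (adj U * adj A)" unfolding Q_def Sp_def using A Uc
    by (simp add: adj_mult assoc_mult_mat[of _ n n _ n _ n] mult_carrier_mat[of _ n n _ n])
  have key: "adj U * (adj A * (A * U)) = dmat n lam"
  proof -
    have "adj A * (A * U) = U * dmat n lam" using MU A Uc by (simp add: assoc_mult_mat[of _ n n _ n _ n])
    thus ?thesis using U by (simp add: unitary_cancel)
  qed
  have "mtrace (A * (U * adj Q)) = mtrace ((A * U) * (Sp * (adj U * adj A)))"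
    unfolding aQ using A Uc Spc by (simp add: assoc_mult_mat[of _ n n _ n _ n] mult_carrier_mat[of _ n n _ n])
  also have "\<dots> = mtrace ((Sp * (adj U * adj A)) * (A * U))"
    using A Uc Spc by (intro mtrace_cyclic) (auto simp: mult_carrier_mat[of _ n n _ n])
  also have "(Sp * (adj U * adj A)) * (A * U) = Sp * (adj U * (adj A * (A * U)))"
    using A Uc Spc by (simp add: assoc_mult_mat[of _ n n _ n _ n] mult_carrier_mat[of _ n n _ n])
  also have "\<dots> = dmat n (\<lambda>i. pinv_sqrt (lam i) * lam i)" unfolding key Sp_def dmat_mult ..
  also have "mtrace \<dots> = complex_of_real (trace_norm A)"
    unfolding mtrace_dmat tn using lam by (simp add: pinv_sqrt_mult)
  finally have trace: "mtrace (A * (U * adj Q)) = complex_of_real (trace_norm A)" .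
  have "adj Q * Q = (Sp * (adj U * adj A)) * (A * (U * Sp))"
    unfolding aQ by (simp add: Q_def)
  also have "\<dots> = Sp * (adj U * (adj A * (A * U))) * Sp"
    using A Uc Spc by (simp add: assoc_mult_mat[of _ n n _ n _ n] mult_carrier_mat[of _ n n _ n])
  also have "\<dots> = dmat n (\<lambda>i. pinv_sqrt (lam i) * lam i * pinv_sqrt (lam i))"
    unfolding key Sp_def dmat_mult ..
  finally have QQ: "adj Q * Q = dmat n (\<lambda>i. pinv_sqrt (lam i) * lam i * pinv_sqrt (lam i))" .
  have "Sp * (adj Q * Q) = Sp"
    unfolding QQ Sp_def dmat_mult using lam
    by (intro eq_matI) (auto simp: pinv_sqrt_mult_pinv_sqrt simp del: mult_eq_0_iff)
  moreover have "Q * (adj Q * Q) = A * (U * (Sp * (adj Q * Q)))"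
    using A Uc Spc Qc by (subst (1) Q_def) (simp add: assoc_mult_mat[of _ n n _ n _ n] mult_carrier_mat[of _ n n _ n])
  ultimately have "Q * (adj Q * Q) = Q" by (simp add: Q_def)
  then have "op_norm (U * adj Q) \<le> 1" using U Qc by (rule op_norm_unitary_mult_adj_le_one[rotated 2])
  then show ?thesis using trace Uc Qc by (intro exI[of _ "U * adj Q"]) auto
qed

lemma trace_norm_triangle: assumes A: "A \<in> carrier_mat n n" and B: "B \<in> carrier_mat n n"
  shows "trace_norm (A + B) \<le> trace_norm A + trace_norm B"
proof -
  have C: "A + B \<in> carrier_mat n n" using A B by simp
  obtain Y where Y: "Y \<in> carrier_mat n n" "op_norm Y \<le> 1" and tr: "mtrace ((A + B) * Y) = complex_of_real (trace_norm (A + B))"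
    using trace_norm_dual_witness[OF C] by blast
  have "(A + B) * Y = A * Y + B * Y" using A B Y by (simp add: add_mult_distrib_mat)
  hence "mtrace ((A + B) * Y) = mtrace (A * Y) + mtrace (B * Y)" using A B Y by (simp add: mtrace_add[where n=n])
  hence "trace_norm (A + B) = cmod (mtrace (A * Y) + mtrace (B * Y))" using tr by (metis norm_of_real trace_norm_nonneg[OF C] abs_of_nonneg)
  also have "\<dots> \<le> cmod (mtrace (A * Y)) + cmod (mtrace (B * Y))" by (rule norm_triangle_ineq)
  also have "\<dots> \<le> trace_norm A * op_norm Y + trace_norm B * op_norm Y"
    using trace_mult_le_trace_norm_op_norm[OF A Y(1)] trace_mult_le_trace_norm_op_norm[OF B Y(1)] by simp
  also have "\<dots> \<le> trace_norm A + trace_norm B"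
    using Y(2) trace_norm_nonneg[OF A] trace_norm_nonneg[OF B]
    by (intro add_mono) (auto intro: mult_left_le)
  finally show ?thesis .
qed

lemma trace_norm_smult: assumes A: "A \<in> carrier_mat n n"
  shows "trace_norm (c \<cdot>\<^sub>m A) = cmod c * trace_norm A"
proof -
  obtain U lam where U: "unitary n U" and lam: "\<forall>i<n. lam i \<ge> 0" and MU: "adj A * A * U = U * dmat n lam"
    using adj_mult_self_diagonalization[OF A] by blast
  have Uc: "U \<in> carrier_mat n n" using U unfolding unitary_def by auto
  have tn: "trace_norm A = (\<Sum>i<n. sqrt (lam i))" using abs_mat_diagonalization[OF A U _ MU] lam by simp
  have cA: "c \<cdot>\<^sub>m A \<in> carrier_mat n n" using A by simp
  have M: "adj (c \<cdot>\<^sub>m A) * (c \<cdot>\<^sub>m A) = complex_of_real ((cmod c)^2) \<cdot>\<^sub>m (adj A * A)"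
  proof (rule eq_matI)
    fix i j assume "i < dim_row (complex_of_real ((cmod c)^2) \<cdot>\<^sub>m (adj A * A))"
      "j < dim_col (complex_of_real ((cmod c)^2) \<cdot>\<^sub>m (adj A * A))"
    hence i: "i < n" and j: "j < n" using A by auto
    have "(adj (c \<cdot>\<^sub>m A) * (c \<cdot>\<^sub>m A)) $$ (i,j) = (\<Sum>k<n. (cnj c * c) * (cnj (A $$ (k,i)) * A $$ (k,j)))"
      using A i j by (simp add: index_mult_mat_sum ac_simps del: index_mult_mat(1))
    also have "\<dots> = (cnj c * c) * (adj A * A) $$ (i,j)"
      using A i j by (simp add: index_mult_mat_sum sum_distrib_left del: index_mult_mat(1))
    also have "cnj c * c = complex_of_real ((cmod c)^2)" by (rule cnj_mult_self)
    finally show "(adj (c \<cdot>\<^sub>m A) * (c \<cdot>\<^sub>m A)) $$ (i,j) = (complex_of_real ((cmod c)^2) \<cdot>\<^sub>m (adj A * A)) $$ (i,j)"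
      using A i j by simp
  qed (use A in auto)
  have dm: "complex_of_real r \<cdot>\<^sub>m dmat n lam = dmat n (\<lambda>i. r * lam i)" for r
    by (rule eq_matI) auto
  have "adj (c \<cdot>\<^sub>m A) * (c \<cdot>\<^sub>m A) * U = complex_of_real ((cmod c)^2) \<cdot>\<^sub>m (adj A * A * U)"
    unfolding M using A Uc by (intro mult_smult_assoc_mat) (auto simp: mult_carrier_mat[of _ n n _ n])
  also have "\<dots> = U * dmat n (\<lambda>i. (cmod c)^2 * lam i)"
    unfolding MU dm[symmetric] using Uc by (rule mult_smult_distrib[symmetric, OF _ dmat_carrier])
  finally have MU': "adj (c \<cdot>\<^sub>m A) * (c \<cdot>\<^sub>m A) * U = U * dmat n (\<lambda>i. (cmod c)^2 * lam i)" .
  have "trace_norm (c \<cdot>\<^sub>m A) = (\<Sum>i<n. sqrt ((cmod c)^2 * lam i))"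
    using abs_mat_diagonalization[OF cA U _ MU'] lam by simp
  also have "\<dots> = (\<Sum>i<n. cmod c * sqrt (lam i))" by (simp add: real_sqrt_mult)
  also have "\<dots> = cmod c * trace_norm A" unfolding tn by (simp add: sum_distrib_left)
  finally show ?thesis .
qed

lemma norm_mtrace_le_trace_norm: assumes A: "A \<in> carrier_mat n n" shows "cmod (mtrace A) \<le> trace_norm A"
proof -
  have "cmod (mtrace (A * 1\<^sub>m n)) \<le> trace_norm A * op_norm (1\<^sub>m n)" by (rule trace_mult_le_trace_norm_op_norm[OF A]) simp
  also have "\<dots> \<le> trace_norm A" using op_norm_one_le[of n] trace_norm_nonneg[OF A] by (simp add: mult_left_le)
  finally show ?thesis using A by simp
qed

lemma op_norm_outer_mat_le: assumes w: "w \<in> carrier_vec n" and z: "z \<in> carrier_vec n"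
  shows "op_norm (outer_mat n w z) \<le> vnorm w * vnorm z"
proof (rule op_norm_leI)
  show "0 \<le> vnorm w * vnorm z" by (simp add: vnorm_nonneg)
  fix v :: "complex vec" assume "v \<in> carrier_vec (dim_col (outer_mat n w z))"
  hence v: "v \<in> carrier_vec n" by simp
  have "outer_mat n w z *\<^sub>v v = cinner z v \<cdot>\<^sub>v w"
    by (rule eq_vecI) (use v w in \<open>auto simp: index_mult_mat_vec_sum cinner_def sum_distrib_left mult_ac simp del: index_mult_mat_vec\<close>)
  hence "vnorm (outer_mat n w z *\<^sub>v v) = cmod (cinner z v) * vnorm w" by (simp add: vnorm_smult)
  also have "\<dots> \<le> (vnorm z * vnorm v) * vnorm w"
    using z v by (intro mult_right_mono cinner_cauchy_schwarz) (auto simp: vnorm_nonneg)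
  finally show "vnorm (outer_mat n w z *\<^sub>v v) \<le> vnorm w * vnorm z * vnorm v" by (simp add: mult_ac)
qed

lemma vnorm_unit_vec: "i < n \<Longrightarrow> vnorm (unit_vec n i) = 1"
proof -
  assume i: "i < n"
  have "(\<Sum>k<n. (cmod (unit_vec n i $ k))^2) = (\<Sum>k\<in>{i}. (cmod (unit_vec n i $ k))^2)"
    by (rule sum.mono_neutral_right) (use i in auto)
  thus ?thesis unfolding vnorm_def using i by simp
qed

lemma norm_index_le_trace_norm: assumes A: "A \<in> carrier_mat n n" and i: "i < n" and j: "j < n"
  shows "cmod (A $$ (i,j)) \<le> trace_norm A"
proof -
  have "mtrace (A * outer_mat n (unit_vec n j) (unit_vec n i)) = mtrace (outer_mat n (unit_vec n j) (unit_vec n i) * A)"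
    using A by (intro mtrace_cyclic) auto
  also have "\<dots> = cinner (unit_vec n i) (A *\<^sub>v unit_vec n j)" by (rule mtrace_outer_mat_mult) (use A in auto)
  also have "\<dots> = A $$ (i,j)"
  proof -
    have "cinner (unit_vec n i) (A *\<^sub>v unit_vec n j) = (\<Sum>k\<in>{i}. cnj (unit_vec n i $ k) * (A *\<^sub>v unit_vec n j) $ k)"
      unfolding cinner_def using A i by (intro sum.mono_neutral_right) auto
    also have "\<dots> = (A *\<^sub>v unit_vec n j) $ i" using i by simp
    also have "\<dots> = A $$ (i,j)" using A i j by simp
    finally show ?thesis .
  qed
  finally have "A $$ (i,j) = mtrace (A * outer_mat n (unit_vec n j) (unit_vec n i))" by simp
  hence "cmod (A $$ (i,j)) \<le> trace_norm A * op_norm (outer_mat n (unit_vec n j) (unit_vec n i))"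
    using trace_mult_le_trace_norm_op_norm[OF A outer_mat_carrier] by simp
  also have "\<dots> \<le> trace_norm A"
    using op_norm_outer_mat_le[of "unit_vec n j" n "unit_vec n i"] vnorm_unit_vec[OF i] vnorm_unit_vec[OF j] trace_norm_nonneg[OF A]
    by (simp add: mult_left_le)
  finally show ?thesis .
qed

lemma trace_norm_pos: assumes A: "A \<in> carrier_mat n n" and A0: "A \<noteq> 0\<^sub>m n n"
  shows "trace_norm A > 0"
proof -
  obtain i j where ij: "i < n" "j < n" "A $$ (i,j) \<noteq> 0"
    using A A0 by (metis carrier_matD eq_matI index_zero_mat(1,2,3))
  have "0 < cmod (A $$ (i,j))" using ij by simp
  also have "\<dots> \<le> trace_norm A" by (rule norm_index_le_trace_norm[OF A ij(1,2)])
  finally show ?thesis .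
qed

lemma density_carrier: "density n \<rho> \<Longrightarrow> \<rho> \<in> carrier_mat n n"
  unfolding density_def psd_def by blast

lemma trace_norm_density: assumes "density n \<rho>" shows "trace_norm \<rho> = 1"
proof -
  have P: "psd n \<rho>" and tr: "mtrace \<rho> = 1" using assms unfolding density_def by auto
  have c: "\<rho> \<in> carrier_mat n n" and h: "adj \<rho> = \<rho>" using P by (auto simp: psd_def)
  have "abs_mat \<rho> = \<rho>" by (rule abs_mat_eqI[OF c P]) (simp add: h)
  thus ?thesis unfolding trace_norm_def using tr by simp
qed

section \<open>Linear maps on matrices\<close>

definition mat_unit :: "nat \<Rightarrow> nat \<Rightarrow> nat \<Rightarrow> complex mat" where
  "mat_unit n i j = outer_mat n (unit_vec n i) (unit_vec n j)"

lemma mat_unit_carrier[simp]: "mat_unit n i j \<in> carrier_mat n n" by (simp add: mat_unit_def)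

lemma mat_unit_dim[simp]: "dim_row (mat_unit n i j) = n" "dim_col (mat_unit n i j) = n" by (simp_all add: mat_unit_def)

lemma mat_unit_index: "a < n \<Longrightarrow> b < n \<Longrightarrow> i < n \<Longrightarrow> j < n \<Longrightarrow> mat_unit n i j $$ (a,b) = (if a = i \<and> b = j then 1 else 0)"
  by (simp add: mat_unit_def)

lemma mtrace_mult_mat_unit: assumes G: "G \<in> carrier_mat n n" and i: "i < n" and j: "j < n"
  shows "mtrace (G * mat_unit n j i) = G $$ (i,j)"
proof -
  have "mtrace (G * mat_unit n j i) = mtrace (mat_unit n j i * G)" using G by (intro mtrace_cyclic) auto
  also have "\<dots> = cinner (unit_vec n i) (G *\<^sub>v unit_vec n j)" unfolding mat_unit_def by (rule mtrace_outer_mat_mult) (use G in auto)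
  also have "\<dots> = (\<Sum>k\<in>{i}. cnj (unit_vec n i $ k) * (G *\<^sub>v unit_vec n j) $ k)"
    unfolding cinner_def using G i by (intro sum.mono_neutral_right) auto
  also have "\<dots> = G $$ (i,j)" using G i j by simp
  finally show ?thesis .
qed

primrec mat_sum_list :: "nat \<Rightarrow> complex mat list \<Rightarrow> complex mat" where
  "mat_sum_list n [] = 0\<^sub>m n n"
| "mat_sum_list n (x # xs) = x + mat_sum_list n xs"

lemma mat_sum_list_carrier: "set xs \<subseteq> carrier_mat n n \<Longrightarrow> mat_sum_list n xs \<in> carrier_mat n n"
  by (induction xs) auto

lemma mat_sum_list_index: "set xs \<subseteq> carrier_mat n n \<Longrightarrow> a < n \<Longrightarrow> b < n \<Longrightarrow>
  mat_sum_list n xs $$ (a,b) = sum_list (map (\<lambda>M. M $$ (a,b)) xs)"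
proof (induction xs)
  case (Cons x xs)
  thus ?case using mat_sum_list_carrier[of xs n] by auto
qed simp

lemma linear_map_on_carrier: "linear_map_on n F \<Longrightarrow> A \<in> carrier_mat n n \<Longrightarrow> F A \<in> carrier_mat n n"
  unfolding linear_map_on_def by auto

lemma linear_map_on_add: "linear_map_on n F \<Longrightarrow> A \<in> carrier_mat n n \<Longrightarrow> B \<in> carrier_mat n n \<Longrightarrow> F (A + B) = F A + F B"
  unfolding linear_map_on_def by auto

lemma linear_map_on_smult: "linear_map_on n F \<Longrightarrow> A \<in> carrier_mat n n \<Longrightarrow> F (c \<cdot>\<^sub>m A) = c \<cdot>\<^sub>m F A"
  unfolding linear_map_on_def by auto

lemma linear_map_on_zero: assumes F: "linear_map_on n F" shows "F (0\<^sub>m n n) = 0\<^sub>m n n"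
proof -
  have "0\<^sub>m n n = (0::complex) \<cdot>\<^sub>m 0\<^sub>m n n" by (rule eq_matI) auto
  hence "F (0\<^sub>m n n) = 0 \<cdot>\<^sub>m F (0\<^sub>m n n)" using linear_map_on_smult[OF F, of "0\<^sub>m n n" 0] by simp
  also have "\<dots> = 0\<^sub>m n n" using linear_map_on_carrier[OF F, of "0\<^sub>m n n"] by (intro eq_matI) auto
  finally show ?thesis .
qed

lemma minus_eq_add_neg_smult: "A \<in> carrier_mat n n \<Longrightarrow> B \<in> carrier_mat n n \<Longrightarrow> A - B = A + (-1 :: complex) \<cdot>\<^sub>m B"
  by (rule eq_matI) auto

lemma linear_map_on_minus: assumes F: "linear_map_on n F" and A: "A \<in> carrier_mat n n" and B: "B \<in> carrier_mat n n"
  shows "F (A - B) = F A - F B"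
proof -
  have "F (A - B) = F A + (-1) \<cdot>\<^sub>m F B"
    using minus_eq_add_neg_smult[OF A B] linear_map_on_add[OF F A, of "(-1) \<cdot>\<^sub>m B"] linear_map_on_smult[OF F B] B by simp
  also have "\<dots> = F A - F B" using linear_map_on_carrier[OF F A] linear_map_on_carrier[OF F B] by (simp add: minus_eq_add_neg_smult)
  finally show ?thesis .
qed

lemma linear_map_on_mat_sum_list: assumes F: "linear_map_on n F"
  shows "set xs \<subseteq> carrier_mat n n \<Longrightarrow> F (mat_sum_list n xs) = mat_sum_list n (map F xs)"
proof (induction xs)
  case Nil thus ?case using linear_map_on_zero[OF F] by simp
next
  case (Cons x xs)
  thus ?case using linear_map_on_add[OF F, of x "mat_sum_list n xs"] mat_sum_list_carrier[of xs n] by simp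
qed

lemma trace_norm_mat_sum_list: "set xs \<subseteq> carrier_mat n n \<Longrightarrow> trace_norm (mat_sum_list n xs) \<le> sum_list (map trace_norm xs)"
proof (induction xs)
  case Nil thus ?case using trace_norm_zero by simp
next
  case (Cons x xs)
  hence "trace_norm (mat_sum_list n (x # xs)) \<le> trace_norm x + trace_norm (mat_sum_list n xs)"
    using mat_sum_list_carrier[of xs n] trace_norm_triangle[of x n "mat_sum_list n xs"] by simp
  thus ?case using Cons by simp
qed

lemma mtrace_mult_mat_sum_list: assumes X: "X \<in> carrier_mat n n"
  shows "set xs \<subseteq> carrier_mat n n \<Longrightarrow> mtrace (X * mat_sum_list n xs) = sum_list (map (\<lambda>M. mtrace (X * M)) xs)"
proof (induction xs)
  case Nil thus ?case using X by (simp add: mtrace_def)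
next
  case (Cons x xs)
  have "X * (x + mat_sum_list n xs) = X * x + X * mat_sum_list n xs"
    using X Cons.prems mat_sum_list_carrier[of xs n] by (intro mult_add_distrib_mat[of _ n n _ n]) auto
  hence "mtrace (X * mat_sum_list n (x # xs)) = mtrace (X * x) + mtrace (X * mat_sum_list n xs)"
    using X Cons.prems mat_sum_list_carrier[of xs n] by (simp add: mtrace_add[where n=n])
  thus ?case using Cons by simp
qed

definition index_pairs :: "nat \<Rightarrow> (nat \<times> nat) list" where
  "index_pairs n = List.product [0..<n] [0..<n]"

lemma sum_list_index_pairs: "sum_list (map f (index_pairs n)) = (\<Sum>p\<in>{..<n} \<times> {..<n}. f p)"
proof -
  have "distinct (index_pairs n)" unfolding index_pairs_def by (simp add: distinct_product)
  hence "sum_list (map f (index_pairs n)) = sum f (set (index_pairs n))" by (rule sum_list_distinct_conv_sum_set)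
  also have "set (index_pairs n) = {..<n} \<times> {..<n}" unfolding index_pairs_def by auto
  finally show ?thesis .
qed

lemma set_index_pairs: "p \<in> set (index_pairs n) \<longleftrightarrow> fst p < n \<and> snd p < n"
  unfolding index_pairs_def by (cases p) auto

definition mat_unit_expansion :: "nat \<Rightarrow> complex mat \<Rightarrow> complex mat list" where
  "mat_unit_expansion n A = map (\<lambda>(i,j). A $$ (i,j) \<cdot>\<^sub>m mat_unit n i j) (index_pairs n)"

lemma mat_unit_expansion_carrier: "set (mat_unit_expansion n A) \<subseteq> carrier_mat n n"
  unfolding mat_unit_expansion_def by auto

lemma mat_sum_list_mat_unit_expansion: assumes A: "A \<in> carrier_mat n n" shows "mat_sum_list n (mat_unit_expansion n A) = A"
proof (rule eq_matI)
  fix a b assume "a < dim_row A" "b < dim_col A"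
  hence a: "a < n" and b: "b < n" using A by auto
  have "mat_sum_list n (mat_unit_expansion n A) $$ (a,b) = sum_list (map (\<lambda>M. M $$ (a,b)) (mat_unit_expansion n A))"
    using mat_unit_expansion_carrier a b by (rule mat_sum_list_index)
  also have "\<dots> = sum_list (map (\<lambda>(i,j). A $$ (i,j) * (if a = i \<and> b = j then 1 else 0)) (index_pairs n))"
    unfolding mat_unit_expansion_def map_map
    by (intro arg_cong[where f=sum_list] map_cong) (auto simp: set_index_pairs mat_unit_index a b)
  also have "\<dots> = (\<Sum>p\<in>{..<n} \<times> {..<n}. (\<lambda>(i,j). A $$ (i,j) * (if a = i \<and> b = j then 1 else 0)) p)"
    by (rule sum_list_index_pairs)
  also have "\<dots> = (\<Sum>p\<in>{(a,b)}. (\<lambda>(i,j). A $$ (i,j) * (if a = i \<and> b = j then 1 else 0)) p)"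
    by (rule sum.mono_neutral_right) (use a b in \<open>auto split: if_splits\<close>)
  also have "\<dots> = A $$ (a,b)" by simp
  finally show "mat_sum_list n (mat_unit_expansion n A) $$ (a,b) = A $$ (a,b)" .
qed (use A mat_sum_list_carrier[OF mat_unit_expansion_carrier] in auto)

lemma linear_map_on_trace_norm_bounded: assumes F: "linear_map_on n F"
  shows "\<exists>C \<ge> 0. \<forall>A \<in> carrier_mat n n. trace_norm (F A) \<le> C * trace_norm A"
proof -
  define C where "C = (\<Sum>p\<in>{..<n} \<times> {..<n}. trace_norm (F (mat_unit n (fst p) (snd p))))"
  have C0: "C \<ge> 0" unfolding C_def by (intro sum_nonneg trace_norm_nonneg[OF linear_map_on_carrier[OF F]]) simp
  have "trace_norm (F A) \<le> C * trace_norm A" if A: "A \<in> carrier_mat n n" for A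
  proof -
    have "F A = mat_sum_list n (map F (mat_unit_expansion n A))" using linear_map_on_mat_sum_list[OF F mat_unit_expansion_carrier[of n A]] mat_sum_list_mat_unit_expansion[OF A] by simp
    hence "trace_norm (F A) \<le> sum_list (map trace_norm (map F (mat_unit_expansion n A)))"
      using trace_norm_mat_sum_list[of "map F (mat_unit_expansion n A)" n] linear_map_on_carrier[OF F] mat_unit_expansion_carrier by auto
    also have "\<dots> = sum_list (map (\<lambda>p. cmod (A $$ (fst p, snd p)) * trace_norm (F (mat_unit n (fst p) (snd p)))) (index_pairs n))"
      unfolding mat_unit_expansion_def map_map
      by (intro arg_cong[where f=sum_list] map_cong) (auto simp: linear_map_on_smult[OF F] trace_norm_smult[OF linear_map_on_carrier[OF F]])
    also have "\<dots> = (\<Sum>p\<in>{..<n} \<times> {..<n}. cmod (A $$ (fst p, snd p)) * trace_norm (F (mat_unit n (fst p) (snd p))))"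
      by (rule sum_list_index_pairs)
    also have "\<dots> \<le> (\<Sum>p\<in>{..<n} \<times> {..<n}. trace_norm A * trace_norm (F (mat_unit n (fst p) (snd p))))"
      by (intro sum_mono mult_right_mono norm_index_le_trace_norm[OF A]) (auto intro!: trace_norm_nonneg[OF linear_map_on_carrier[OF F]])
    also have "\<dots> = C * trace_norm A" unfolding C_def by (simp add: sum_distrib_left mult.commute)
    finally show ?thesis .
  qed
  thus ?thesis using C0 by blast
qed

section \<open>Induced norms of linear maps\<close>

lemma le_Sup_ratio:
  fixes f :: "complex mat \<Rightarrow> real" and P :: "complex mat \<Rightarrow> bool" and n :: nat
  defines "R \<equiv> Sup (insert 0 {f s / trace_norm s | s. s \<in> carrier_mat n n \<and> s \<noteq> 0\<^sub>m n n \<and> P s})"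
  assumes bounded: "\<And>s. s \<in> carrier_mat n n \<Longrightarrow> P s \<Longrightarrow> f s \<le> C * trace_norm s"
  shows "0 \<le> R"
    and "\<And>s. s \<in> carrier_mat n n \<Longrightarrow> s \<noteq> 0\<^sub>m n n \<Longrightarrow> P s \<Longrightarrow> f s \<le> R * trace_norm s"
proof -
  let ?T = "insert 0 {f s / trace_norm s | s. s \<in> carrier_mat n n \<and> s \<noteq> 0\<^sub>m n n \<and> P s}"
  have "f s / trace_norm s \<le> C" if "s \<in> carrier_mat n n" "s \<noteq> 0\<^sub>m n n" "P s" for s
    using bounded[OF that(1,3)] trace_norm_pos[OF that(1,2)] by (simp add: divide_le_eq)
  hence bdd: "bdd_above ?T" by (intro bdd_aboveI[of _ "max 0 C"]) fastforce
  show "0 \<le> R" unfolding R_def using bdd by (rule cSup_upper[rotated]) simp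
  fix s assume s: "s \<in> carrier_mat n n" "s \<noteq> 0\<^sub>m n n" "P s"
  have "f s / trace_norm s \<in> ?T" using s by blast
  then have "f s / trace_norm s \<le> R" unfolding R_def using bdd by (rule cSup_upper)
  thus "f s \<le> R * trace_norm s" using trace_norm_pos[OF s(1,2)] by (simp add: divide_le_eq)
qed

lemma Sup_ratio_le:
  fixes f :: "complex mat \<Rightarrow> real"
  assumes "0 \<le> B" and "\<And>s. s \<in> carrier_mat n n \<Longrightarrow> s \<noteq> 0\<^sub>m n n \<Longrightarrow> P s \<Longrightarrow> f s \<le> B * trace_norm s"
  shows "Sup (insert 0 {f s / trace_norm s | s. s \<in> carrier_mat n n \<and> s \<noteq> 0\<^sub>m n n \<and> P s}) \<le> B"
proof (rule cSup_least)
  fix x assume "x \<in> insert 0 {f s / trace_norm s | s. s \<in> carrier_mat n n \<and> s \<noteq> 0\<^sub>m n n \<and> P s}"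
  then show "x \<le> B"
    using assms trace_norm_pos by (auto simp: divide_le_eq)
qed simp

lemma norm_1to1_nonneg:
  assumes G: "linear_map_on n G" shows "0 \<le> norm_1to1 n G"
proof -
  obtain C where "\<And>s. s \<in> carrier_mat n n \<Longrightarrow> trace_norm (G s) \<le> C * trace_norm s"
    using linear_map_on_trace_norm_bounded[OF G] by blast
  then show ?thesis unfolding norm_1to1_def by (rule le_Sup_ratio(1)[where P = "\<lambda>_. True", simplified])
qed

lemma trace_norm_le_norm_1to1:
  assumes G: "linear_map_on n G" and s: "s \<in> carrier_mat n n"
  shows "trace_norm (G s) \<le> norm_1to1 n G * trace_norm s"
proof (cases "s = 0\<^sub>m n n")
  case True
  thus ?thesis using linear_map_on_zero[OF G] by (simp add: trace_norm_zero)
next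
  case False
  obtain C where "\<And>s. s \<in> carrier_mat n n \<Longrightarrow> trace_norm (G s) \<le> C * trace_norm s"
    using linear_map_on_trace_norm_bounded[OF G] by blast
  from le_Sup_ratio(2)[where P = "\<lambda>_. True", OF this s False]
  show ?thesis unfolding norm_1to1_def by simp
qed

lemma ergodicity_coeff_nonneg:
  assumes G: "linear_map_on n G" shows "0 \<le> ergodicity_coeff n G"
proof -
  obtain C where "\<And>s. s \<in> carrier_mat n n \<Longrightarrow> trace_norm (G s) \<le> C * trace_norm s"
    using linear_map_on_trace_norm_bounded[OF G] by blast
  then show ?thesis unfolding ergodicity_coeff_def by (rule le_Sup_ratio(1))
qed

lemma trace_norm_le_ergodicity_coeff:
  assumes G: "linear_map_on n G" and s: "s \<in> carrier_mat n n" and traceless: "mtrace s = 0"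
  shows "trace_norm (G s) \<le> ergodicity_coeff n G * trace_norm s"
proof (cases "s = 0\<^sub>m n n")
  case True
  thus ?thesis using linear_map_on_zero[OF G] by (simp add: trace_norm_zero)
next
  case False
  obtain C where "\<And>s. s \<in> carrier_mat n n \<Longrightarrow> trace_norm (G s) \<le> C * trace_norm s"
    using linear_map_on_trace_norm_bounded[OF G] by blast
  from le_Sup_ratio(2)[where P = "\<lambda>s. mtrace s = 0", OF this s False traceless]
  show ?thesis unfolding ergodicity_coeff_def .
qed

lemma linear_map_on_diff: assumes F1: "linear_map_on n F1" and F2: "linear_map_on n F2"
  shows "linear_map_on n (\<lambda>X. F1 X - F2 X)"
proof -
  have "F1 A - F2 A \<in> carrier_mat n n" if "A \<in> carrier_mat n n" for A
    using linear_map_on_carrier[OF F1 that] linear_map_on_carrier[OF F2 that] by (metis minus_carrier_mat)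
  moreover have "F1 (A + B) - F2 (A + B) = (F1 A - F2 A) + (F1 B - F2 B)"
    if A: "A \<in> carrier_mat n n" and B: "B \<in> carrier_mat n n" for A B
    unfolding linear_map_on_add[OF F1 A B] linear_map_on_add[OF F2 A B]
    using linear_map_on_carrier[OF F1 A] linear_map_on_carrier[OF F2 A] linear_map_on_carrier[OF F1 B] linear_map_on_carrier[OF F2 B]
    by (intro eq_matI) auto
  moreover have "F1 (c \<cdot>\<^sub>m A) - F2 (c \<cdot>\<^sub>m A) = c \<cdot>\<^sub>m (F1 A - F2 A)" if A: "A \<in> carrier_mat n n" for A c
    unfolding linear_map_on_smult[OF F1 A] linear_map_on_smult[OF F2 A]
    using linear_map_on_carrier[OF F1 A] linear_map_on_carrier[OF F2 A]
    by (intro eq_matI) (auto simp: algebra_simps)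
  ultimately show ?thesis unfolding linear_map_on_def by blast
qed

lemma dual_map_char: assumes F: "linear_map_on n F" and X: "X \<in> carrier_mat n n"
  shows "dual_map n F X \<in> carrier_mat n n"
    and "\<And>B. B \<in> carrier_mat n n \<Longrightarrow> mtrace (dual_map n F X * B) = mtrace (X * F B)"
proof -
  define P where "P = (\<lambda>G. G \<in> carrier_mat n n \<and> (\<forall>B \<in> carrier_mat n n. mtrace (X * F B) = mtrace (G * B)))"
  define G0 where "G0 = mat n n (\<lambda>(i,j). mtrace (X * F (mat_unit n j i)))"
  have G0c: "G0 \<in> carrier_mat n n" unfolding G0_def by simp
  have "mtrace (X * F B) = mtrace (G0 * B)" if B: "B \<in> carrier_mat n n" for B
  proof -
    have "mtrace (X * F B) = mtrace (X * mat_sum_list n (map F (mat_unit_expansion n B)))"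
      using linear_map_on_mat_sum_list[OF F mat_unit_expansion_carrier[of n B]] mat_sum_list_mat_unit_expansion[OF B] by simp
    also have "\<dots> = sum_list (map (\<lambda>M. mtrace (X * M)) (map F (mat_unit_expansion n B)))"
      using X linear_map_on_carrier[OF F] mat_unit_expansion_carrier[of n B] by (intro mtrace_mult_mat_sum_list) auto
    also have "\<dots> = sum_list (map (\<lambda>p. B $$ (fst p, snd p) * mtrace (X * F (mat_unit n (fst p) (snd p)))) (index_pairs n))"
      unfolding mat_unit_expansion_def map_map
      by (intro arg_cong[where f=sum_list] map_cong)
         (auto simp: linear_map_on_smult[OF F] mult_smult_distrib[OF X linear_map_on_carrier[OF F]] mtrace_smult[where n=n] mult_carrier_mat[of _ n n _ n] linear_map_on_carrier[OF F] X)
    also have "\<dots> = (\<Sum>p\<in>{..<n} \<times> {..<n}. B $$ (fst p, snd p) * mtrace (X * F (mat_unit n (fst p) (snd p))))"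
      by (rule sum_list_index_pairs)
    also have "\<dots> = (\<Sum>k<n. \<Sum>i<n. B $$ (k, i) * mtrace (X * F (mat_unit n k i)))"
      by (subst sum.cartesian_product) (auto intro!: sum.cong)
    also have "\<dots> = (\<Sum>i<n. \<Sum>k<n. G0 $$ (i,k) * B $$ (k,i))"
      unfolding G0_def by (subst sum.swap) (auto intro!: sum.cong)
    also have "\<dots> = mtrace (G0 * B)"
      unfolding mtrace_def using G0c B by (simp add: index_mult_mat_sum del: index_mult_mat(1))
    finally show ?thesis .
  qed
  hence PG0: "P G0" unfolding P_def using G0c by blast
  have uniq: "G = G0" if "P G" for G
  proof (rule eq_matI)
    have Gc: "G \<in> carrier_mat n n" using that unfolding P_def by auto
    fix i j assume "i < dim_row G0" "j < dim_col G0"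
    hence i: "i < n" and j: "j < n" using G0c by auto
    have "G $$ (i,j) = mtrace (G * mat_unit n j i)" using mtrace_mult_mat_unit[OF Gc i j] by simp
    also have "\<dots> = mtrace (G0 * mat_unit n j i)" using that PG0 unfolding P_def by (metis mat_unit_carrier)
    also have "\<dots> = G0 $$ (i,j)" using mtrace_mult_mat_unit[OF G0c i j] by simp
    finally show "G $$ (i,j) = G0 $$ (i,j)" .
  qed (use that G0c in \<open>auto simp: P_def\<close>)
  have "P (dual_map n F X)" unfolding dual_map_def P_def[symmetric] using PG0 uniq by (rule theI)
  thus "dual_map n F X \<in> carrier_mat n n"
    and "\<And>B. B \<in> carrier_mat n n \<Longrightarrow> mtrace (dual_map n F X * B) = mtrace (X * F B)"
    unfolding P_def by auto
qed

section \<open>Perturbation of a fixed point\<close>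

lemma traceless_bound_by_contraction:
  fixes \<phi> :: "complex mat \<Rightarrow> complex" and F :: "complex mat \<Rightarrow> complex mat"
  assumes F: "\<And>s. s \<in> carrier_mat n n \<Longrightarrow> mtrace s = 0 \<Longrightarrow>
        F s \<in> carrier_mat n n \<and> mtrace (F s) = 0 \<and> trace_norm (F s) \<le> t * trace_norm s"
    and t: "0 \<le> t" "t < 1" and c: "0 \<le> c"
    and \<phi>_bounded: "\<And>s. s \<in> carrier_mat n n \<Longrightarrow> cmod (\<phi> s) \<le> M * trace_norm s"
    and \<phi>_step: "\<And>s. s \<in> carrier_mat n n \<Longrightarrow> mtrace s = 0 \<Longrightarrow>
        cmod (\<phi> s) \<le> cmod (\<phi> (F s)) + c * trace_norm s"
    and s: "s \<in> carrier_mat n n" "mtrace s = 0"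
  shows "cmod (\<phi> s) \<le> c / (1 - t) * trace_norm s"
proof -
  \<comment> \<open>The best constant \<open>A\<close> on traceless matrices is finite by \<open>\<phi>_bounded\<close>, and \<open>\<phi>_step\<close> gives \<open>A \<le> A t + c\<close>.\<close>
  define A where "A = Sup (insert 0 {cmod (\<phi> s) / trace_norm s | s.
    s \<in> carrier_mat n n \<and> s \<noteq> 0\<^sub>m n n \<and> mtrace s = 0})"
  have A_nonneg: "0 \<le> A" unfolding A_def using \<phi>_bounded by (rule le_Sup_ratio(1))
  have A_bound: "cmod (\<phi> s) \<le> A * trace_norm s" if "s \<in> carrier_mat n n" "mtrace s = 0" for s
  proof (cases "s = 0\<^sub>m n n")
    case True
    thus ?thesis using \<phi>_bounded[OF that(1)] by (simp add: trace_norm_zero)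
  next
    case False
    thus ?thesis unfolding A_def using \<phi>_bounded that by (intro le_Sup_ratio(2))
  qed
  have "A \<le> A * t + c"
  proof -
    have "cmod (\<phi> s) \<le> (A * t + c) * trace_norm s"
      if "s \<in> carrier_mat n n" "mtrace s = 0" for s
    proof -
      have "cmod (\<phi> s) \<le> A * trace_norm (F s) + c * trace_norm s"
        using \<phi>_step[OF that] A_bound F[OF that] by fastforce
      also have "\<dots> \<le> A * (t * trace_norm s) + c * trace_norm s"
        using F[OF that] A_nonneg by (simp add: mult_left_mono)
      finally show ?thesis by (simp add: algebra_simps)
    qed
    then have "Sup (insert 0 {cmod (\<phi> s) / trace_norm s | s.
        s \<in> carrier_mat n n \<and> s \<noteq> 0\<^sub>m n n \<and> mtrace s = 0}) \<le> A * t + c"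
      using A_nonneg t c by (intro Sup_ratio_le) auto
    then show ?thesis unfolding A_def[symmetric] .
  qed
  then have "A \<le> c / (1 - t)" using t by (simp add: pos_le_divide_eq algebra_simps)
  then show ?thesis
    using A_bound[OF s] trace_norm_nonneg[OF s(1)] by (meson mult_right_mono order_trans)
qed

lemma mtrace_mult_one_minus:
  assumes "X \<in> carrier_mat n n" "Y \<in> carrier_mat n n"
  shows "mtrace (X * (1\<^sub>m n - Y)) = mtrace X - mtrace (X * Y)"
proof -
  have "X * (1\<^sub>m n - Y) = X * 1\<^sub>m n - X * Y" using assms by (intro mult_minus_distrib_mat) auto
  then show ?thesis using assms by (simp add: mtrace_minus[of _ n])
qed

lemma norm_mtrace_mult_le:
  assumes X: "X \<in> carrier_mat n n" and Y: "Y \<in> carrier_mat n n"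
  shows "cmod (mtrace (X * Y)) \<le> (1 + op_norm (1\<^sub>m n - Y)) * trace_norm X"
proof -
  have "mtrace (X * Y) = mtrace X - mtrace (X * (1\<^sub>m n - Y))"
    using mtrace_mult_one_minus[OF X Y] by simp
  then have "cmod (mtrace (X * Y)) \<le> cmod (mtrace X) + cmod (mtrace (X * (1\<^sub>m n - Y)))"
    by (simp add: norm_triangle_ineq4)
  also have "\<dots> \<le> trace_norm X + trace_norm X * op_norm (1\<^sub>m n - Y)"
    using X Y by (intro add_mono norm_mtrace_le_trace_norm trace_mult_le_trace_norm_op_norm) auto
  finally show ?thesis by (simp add: algebra_simps)
qed

lemma trace_norm_traceless_part_le:
  assumes \<rho>: "density n \<rho>" and s: "s \<in> carrier_mat n n"
  shows "trace_norm (s - mtrace s \<cdot>\<^sub>m \<rho>) \<le> 2 * trace_norm s"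
proof -
  have \<rho>_carrier: "\<rho> \<in> carrier_mat n n" using \<rho> by (rule density_carrier)
  have "s - mtrace s \<cdot>\<^sub>m \<rho> = s + (- mtrace s) \<cdot>\<^sub>m \<rho>" using s \<rho>_carrier by (intro eq_matI) auto
  then have "trace_norm (s - mtrace s \<cdot>\<^sub>m \<rho>) \<le> trace_norm s + trace_norm ((- mtrace s) \<cdot>\<^sub>m \<rho>)"
    using s \<rho>_carrier by (simp add: trace_norm_triangle)
  also have "trace_norm ((- mtrace s) \<cdot>\<^sub>m \<rho>) = cmod (mtrace s)"
    using trace_norm_smult[OF \<rho>_carrier] trace_norm_density[OF \<rho>] by simp
  also have "cmod (mtrace s) \<le> trace_norm s" using s by (rule norm_mtrace_le_trace_norm)
  finally show ?thesis by simp
qed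

context
  fixes D :: nat and F1 F2 :: "complex mat \<Rightarrow> complex mat" and \<rho> \<xi> :: "complex mat"
  assumes F1: "linear_map_on D F1" and F2: "linear_map_on D F2"
    and tp: "trace_preserving D F1"
    and \<rho>: "density D \<rho>" and \<rho>_fixed: "F1 \<rho> = \<rho>"
    and \<xi>: "\<xi> \<in> carrier_mat D D" and \<xi>_fixed: "dual_map D F2 \<xi> = \<xi>"
    and normalised: "mtrace (\<rho> * \<xi>) = 1"
begin

lemma trace_deviation_step:
  assumes s: "s \<in> carrier_mat D D"
  shows "mtrace (s * (1\<^sub>m D - \<xi>)) = mtrace (F1 s * (1\<^sub>m D - \<xi>)) + mtrace ((F1 s - F2 s) * \<xi>)"
proof -
  have F1s: "F1 s \<in> carrier_mat D D" and F2s: "F2 s \<in> carrier_mat D D"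
    using s F1 F2 by (auto intro: linear_map_on_carrier)
  have "mtrace (F2 s * \<xi>) = mtrace (\<xi> * F2 s)" using F2s \<xi> by (rule mtrace_cyclic)
  also have "\<dots> = mtrace (\<xi> * s)" using dual_map_char(2)[OF F2 \<xi> s] \<xi>_fixed by simp
  also have "\<dots> = mtrace (s * \<xi>)" using \<xi> s by (rule mtrace_cyclic)
  finally have "mtrace (F2 s * \<xi>) = mtrace (s * \<xi>)" .
  moreover have "mtrace (F1 s) = mtrace s" using tp s unfolding trace_preserving_def by blast
  ultimately show ?thesis
    using s F1s F2s \<xi>
    by (simp add: mtrace_mult_one_minus minus_mult_distrib_mat[of _ D D] mtrace_minus[of _ D])
qed

lemma trace_deviation_density: "mtrace (\<rho> * (1\<^sub>m D - \<xi>)) = 0"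
  using \<rho> \<xi> normalised by (simp add: mtrace_mult_one_minus density_def psd_def)

lemma norm_trace_perturbation_le:
  assumes s: "s \<in> carrier_mat D D"
  shows "cmod (mtrace ((F1 s - F2 s) * \<xi>))
    \<le> norm_1to1 D (\<lambda>X. F1 X - F2 X) * (1 + op_norm (1\<^sub>m D - \<xi>)) * trace_norm s"
proof -
  have G: "linear_map_on D (\<lambda>X. F1 X - F2 X)" using F1 F2 by (rule linear_map_on_diff)
  have "cmod (mtrace ((F1 s - F2 s) * \<xi>)) \<le> (1 + op_norm (1\<^sub>m D - \<xi>)) * trace_norm (F1 s - F2 s)"
    using s \<xi> linear_map_on_carrier[OF G] by (intro norm_mtrace_mult_le) auto
  also have "\<dots> \<le> (1 + op_norm (1\<^sub>m D - \<xi>)) * (norm_1to1 D (\<lambda>X. F1 X - F2 X) * trace_norm s)"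
    using trace_norm_le_norm_1to1[OF G s] op_norm_nonneg[of "1\<^sub>m D - \<xi>"]
    by (intro mult_left_mono) auto
  finally show ?thesis by (simp add: mult_ac)
qed

lemma trace_deviation_traceless:
  assumes t: "ergodicity_coeff D F1 < 1" and s: "s \<in> carrier_mat D D" "mtrace s = 0"
  shows "cmod (mtrace (s * (1\<^sub>m D - \<xi>)))
    \<le> norm_1to1 D (\<lambda>X. F1 X - F2 X) * (1 + op_norm (1\<^sub>m D - \<xi>)) / (1 - ergodicity_coeff D F1)
       * trace_norm s"
proof (rule traceless_bound_by_contraction[where F = F1 and M = "op_norm (1\<^sub>m D - \<xi>)", OF _ _ t])
  fix s :: "complex mat" assume s: "s \<in> carrier_mat D D"
  have "cmod (mtrace (s * (1\<^sub>m D - \<xi>))) \<le> trace_norm s * op_norm (1\<^sub>m D - \<xi>)"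
    using \<xi> by (intro trace_mult_le_trace_norm_op_norm[OF s]) auto
  then show "cmod (mtrace (s * (1\<^sub>m D - \<xi>))) \<le> op_norm (1\<^sub>m D - \<xi>) * trace_norm s"
    by (simp only: mult.commute)
  show "cmod (mtrace (s * (1\<^sub>m D - \<xi>)))
    \<le> cmod (mtrace (F1 s * (1\<^sub>m D - \<xi>))) + norm_1to1 D (\<lambda>X. F1 X - F2 X) * (1 + op_norm (1\<^sub>m D - \<xi>)) * trace_norm s"
    unfolding trace_deviation_step[OF s]
    by (rule order_trans[OF norm_triangle_ineq add_left_mono[OF norm_trace_perturbation_le[OF s]]])
next
  fix s :: "complex mat" assume "s \<in> carrier_mat D D" "mtrace s = 0"
  then show "F1 s \<in> carrier_mat D D \<and> mtrace (F1 s) = 0 \<and> trace_norm (F1 s) \<le> ergodicity_coeff D F1 * trace_norm s"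
    using tp F1 by (auto simp: trace_preserving_def linear_map_on_carrier trace_norm_le_ergodicity_coeff)
qed (use s F1 F2 ergodicity_coeff_nonneg norm_1to1_nonneg linear_map_on_diff op_norm_nonneg in auto)

lemma trace_deviation_traceless_part:
  assumes s: "s \<in> carrier_mat D D"
  shows "mtrace (F1 s * (1\<^sub>m D - \<xi>)) = mtrace (F1 (s - mtrace s \<cdot>\<^sub>m \<rho>) * (1\<^sub>m D - \<xi>))"
proof -
  have \<rho>_carrier: "\<rho> \<in> carrier_mat D D" using \<rho> by (rule density_carrier)
  have \<eta>: "1\<^sub>m D - \<xi> \<in> carrier_mat D D" using \<xi> by (rule minus_carrier_mat)
  have "F1 (s - mtrace s \<cdot>\<^sub>m \<rho>) = F1 s - mtrace s \<cdot>\<^sub>m \<rho>"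
    using s \<rho>_carrier \<rho>_fixed by (simp add: linear_map_on_minus[OF F1] linear_map_on_smult[OF F1])
  then have "F1 (s - mtrace s \<cdot>\<^sub>m \<rho>) * (1\<^sub>m D - \<xi>)
      = F1 s * (1\<^sub>m D - \<xi>) - mtrace s \<cdot>\<^sub>m (\<rho> * (1\<^sub>m D - \<xi>))"
    using linear_map_on_carrier[OF F1 s] \<rho>_carrier \<eta>
    by (simp add: minus_mult_distrib_mat[of _ D D] mult_smult_assoc_mat[of _ D D])
  then show ?thesis
    using linear_map_on_carrier[OF F1 s] \<rho>_carrier \<eta> trace_deviation_density
    by (simp add: mtrace_minus[of _ D] mtrace_smult[of _ D])
qed

lemma trace_deviation_bound:
  assumes t: "ergodicity_coeff D F1 < 1" and s: "s \<in> carrier_mat D D"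
  shows "cmod (mtrace (s * (1\<^sub>m D - \<xi>)))
    \<le> (1 + ergodicity_coeff D F1) / (1 - ergodicity_coeff D F1) * norm_1to1 D (\<lambda>X. F1 X - F2 X)
       * (1 + op_norm (1\<^sub>m D - \<xi>)) * trace_norm s"
proof -
  let ?t = "ergodicity_coeff D F1" and ?c = "norm_1to1 D (\<lambda>X. F1 X - F2 X) * (1 + op_norm (1\<^sub>m D - \<xi>))"
  define s\<^sub>0 where "s\<^sub>0 = s - mtrace s \<cdot>\<^sub>m \<rho>"
  have s\<^sub>0: "s\<^sub>0 \<in> carrier_mat D D" "mtrace s\<^sub>0 = 0"
    using s density_carrier[OF \<rho>] \<rho> unfolding s\<^sub>0_def density_def
    by (auto simp: mtrace_minus[of _ D] mtrace_smult)
  have "trace_norm (F1 s\<^sub>0) \<le> ?t * trace_norm s\<^sub>0"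
    using trace_norm_le_ergodicity_coeff[OF F1 s\<^sub>0] .
  also have "\<dots> \<le> ?t * (2 * trace_norm s)"
    using trace_norm_traceless_part_le[OF \<rho> s] ergodicity_coeff_nonneg[OF F1]
    unfolding s\<^sub>0_def by (rule mult_left_mono)
  finally have F1s\<^sub>0_small: "trace_norm (F1 s\<^sub>0) \<le> 2 * ?t * trace_norm s" by simp
  have c_nonneg: "0 \<le> ?c"
    using F1 F2 op_norm_nonneg norm_1to1_nonneg linear_map_on_diff by simp
  have "cmod (mtrace (s * (1\<^sub>m D - \<xi>)))
      \<le> cmod (mtrace (F1 s\<^sub>0 * (1\<^sub>m D - \<xi>))) + cmod (mtrace ((F1 s - F2 s) * \<xi>))"
    unfolding trace_deviation_step[OF s] trace_deviation_traceless_part[OF s] s\<^sub>0_def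
    by (rule norm_triangle_ineq)
  also have "\<dots> \<le> ?c / (1 - ?t) * trace_norm (F1 s\<^sub>0) + ?c * trace_norm s"
    using trace_deviation_traceless[OF t linear_map_on_carrier[OF F1 s\<^sub>0(1)]] s\<^sub>0 tp
      norm_trace_perturbation_le[OF s]
    unfolding trace_preserving_def by (intro add_mono) auto
  also have "\<dots> \<le> ?c / (1 - ?t) * (2 * ?t * trace_norm s) + ?c * trace_norm s"
    using F1s\<^sub>0_small c_nonneg t by (intro add_right_mono mult_left_mono) auto
  also have "\<dots> = (1 + ?t) / (1 - ?t) * ?c * trace_norm s"
    using t by (simp add: field_simps)
  finally show ?thesis by (simp add: mult_ac)
qed

end

theorem mainTheorem6:
  fixes D :: nat and F1 F2 :: "complex mat \<Rightarrow> complex mat" and \<rho>1 \<xi> :: "complex mat" and k :: real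
  assumes cp1: "completely_positive D F1" and cp2: "completely_positive D F2"
    and sr1: "map_spectral_radius D F1 = 1" and sr2: "map_spectral_radius D F2 = 1"
    and tp1: "trace_preserving D F1"
    and tau: "ergodicity_coeff D F1 < 1"
    and rho: "density D \<rho>1" and fix1: "F1 \<rho>1 = \<rho>1"
    and xi: "\<xi> \<in> carrier_mat D D" and fix2: "dual_map D F2 \<xi> = \<xi>"
    and norm: "mtrace (\<rho>1 * \<xi>) = 1"
    and kdef: "k = (1 + ergodicity_coeff D F1) / (1 - ergodicity_coeff D F1)
                   * norm_1to1 D (\<lambda>X. F1 X - F2 X)"
    and k1: "k < 1"
  shows "op_norm (1\<^sub>m D - \<xi>) \<le> k / (1 - k)"
proof -
  have F1: "linear_map_on D F1" and F2: "linear_map_on D F2"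
    using cp1 cp2 unfolding completely_positive_def by auto
  have "0 \<le> k"
    using kdef tau ergodicity_coeff_nonneg[OF F1] norm_1to1_nonneg[OF linear_map_on_diff[OF F1 F2]]
    by simp
  have "op_norm (1\<^sub>m D - \<xi>) \<le> k * (1 + op_norm (1\<^sub>m D - \<xi>))"
  proof (rule op_norm_le_by_trace_duality)
    show "1\<^sub>m D - \<xi> \<in> carrier_mat D D" using xi by (rule minus_carrier_mat)
    show "0 \<le> k * (1 + op_norm (1\<^sub>m D - \<xi>))" using \<open>0 \<le> k\<close> op_norm_nonneg by simp
    fix s :: "complex mat" assume "s \<in> carrier_mat D D"
    from trace_deviation_bound[OF F1 F2 tp1 rho fix1 xi fix2 norm tau this]
    show "cmod (mtrace (s * (1\<^sub>m D - \<xi>))) \<le> k * (1 + op_norm (1\<^sub>m D - \<xi>)) * trace_norm s"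
      unfolding kdef .
  qed
  with k1 show ?thesis by (simp add: pos_le_divide_eq algebra_simps)
qed

end
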